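(* Let $\varphi\in\Phi_*$, let $a$ be measurable with linear growth, and let $X^{\varphi,a}$ be the Harris flow with infinitesimal covariance $\varphi$ and drift $a$. Then for every $T>0$, almost surely the family $\{X^{\varphi,a}_{0,s}:s\in[0,T]\}$ is uniformly continuous in $s$ with respect to the topology of uniform convergence on compact sets, i.e. a.s. for every $N>0$, $$\lim_{h\to0+}\ \sup_{s,t\in[0,T],\,|t-s|\le h}\ \sup_{|x|\le N}\big|X^{\varphi,a}_{0,t}(x)-X^{\varphi,a}_{0,s}(x)\big|=0 .$$
   Context: A Harris flow $X^{\varphi,a}$ with infinitesimal covariance $\varphi$ and drift $a$ is a family $\{X^{\varphi,a}_{s,t}:0\le s\le t\}$ of random non-decreasing càdlàg maps $\mathbb R\to\mathbb R$ (elements of $D^\uparrow(\mathbb R)$ with the $J_1$ topology) such that: (i) $X_{s,r}=X_{t,r}\circ X_{s,t}$ a.s. for $s\le t\le r$, $X_{s,s}=\mathrm{Id}$; (ii) increments over consecutive intervals are independent; (iii) stationarity of increments in law; (iv) $X_{0,h}\to\mathrm{Id}$ in probability as $h\to0+$; (v) for every $x,s$, $w_t(x,s)=X_{s,t}(x)-x-\int_s^ta(X_{s,r}(x))dr$, $t\ge s$, is a Wiener process from $0$ w.r.t. the filtration generated by the flow on $[s,t]$; (vi) $\langle w(x,s),w(y,s)\rangle_t=\int_s^t\varphi(X_{s,r}(x)-X_{s,r}(y))dr$. $\Phi_*$ is the set of continuous symmetric strictly positive definite $\varphi$ with $\varphi(0)=1$ that are Lipschitz outside every neighborhood of $0$.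 *)

theory Defs
  imports "HOL-Probability.Probability"
begin

definition strictly_pos_def_fun :: "(real \<Rightarrow> real) \<Rightarrow> bool" where
  "strictly_pos_def_fun \<phi> \<longleftrightarrow>
     (\<forall>(n::nat) (x::nat \<Rightarrow> real) (c::nat \<Rightarrow> real).
        inj_on x {..<n} \<and> (\<exists>i<n. c i \<noteq> 0) \<longrightarrow>
        (\<Sum>i<n. \<Sum>j<n. c i * c j * \<phi> (x i - x j)) > 0)"

definition Phi_star :: "(real \<Rightarrow> real) set" where
  "Phi_star = {\<phi>. continuous_on UNIV \<phi> \<and> (\<forall>x. \<phi> (- x) = \<phi> x) \<and>
      strictly_pos_def_fun \<phi> \<and> \<phi> 0 = 1 \<and>
      (\<forall>\<delta>>0. \<exists>L. \<forall>x y. \<delta> \<le> \<bar>x\<bar> \<and> \<delta> \<le> \<bar>y\<bar> \<longrightarrow> \<bar>\<phi> x - \<phi> y\<bar> \<le> L * \<bar>x - y\<bar>)}"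

definition linear_growth :: "(real \<Rightarrow> real) \<Rightarrow> bool" where
  "linear_growth a \<longleftrightarrow> (\<exists>C. \<forall>x. \<bar>a x\<bar> \<le> C * (1 + \<bar>x\<bar>))"

definition cadlag_nondecr :: "(real \<Rightarrow> real) \<Rightarrow> bool" where
  "cadlag_nondecr f \<longleftrightarrow> mono f \<and>
     (\<forall>x. continuous (at_right x) f) \<and> (\<forall>x. \<exists>l. (f \<longlongrightarrow> l) (at_left x))"

definition flow_filtration ::
  "'a measure \<Rightarrow> (real \<Rightarrow> real \<Rightarrow> 'a \<Rightarrow> real \<Rightarrow> real) \<Rightarrow> real \<Rightarrow> real \<Rightarrow> 'a measure" where
  "flow_filtration M X s t = sigma (space M)
     {(\<lambda>\<omega>. X u v \<omega> y) -` B \<inter> space M | u v y B.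
        s \<le> u \<and> u \<le> v \<and> v \<le> t \<and> B \<in> sets borel}"

definition martingale_from ::
  "'a measure \<Rightarrow> (real \<Rightarrow> 'a measure) \<Rightarrow> real \<Rightarrow> (real \<Rightarrow> 'a \<Rightarrow> real) \<Rightarrow> bool" where
  "martingale_from M F s P \<longleftrightarrow>
     (\<forall>t\<ge>s. P t \<in> borel_measurable (F t) \<and> integrable M (P t)) \<and>
     (\<forall>u t. s \<le> u \<and> u \<le> t \<longrightarrow>
        (\<forall>A\<in>sets (F u). (\<integral>\<omega>. indicator A \<omega> * P t \<omega> \<partial>M) = (\<integral>\<omega>. indicator A \<omega> * P u \<omega> \<partial>M)))"

definition wiener_from ::
  "'a measure \<Rightarrow> (real \<Rightarrow> 'a measure) \<Rightarrow> real \<Rightarrow> (real \<Rightarrow> 'a \<Rightarrow> real) \<Rightarrow> bool" where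
  "wiener_from M F s W \<longleftrightarrow>
     (\<forall>t\<ge>s. W t \<in> borel_measurable (F t)) \<and>
     (\<forall>\<omega>\<in>space M. W s \<omega> = 0) \<and>
     (AE \<omega> in M. continuous_on {s..} (\<lambda>t. W t \<omega>)) \<and>
     (\<forall>u t. s \<le> u \<and> u < t \<longrightarrow>
        distributed M lborel (\<lambda>\<omega>. W t \<omega> - W u \<omega>) (normal_density 0 (sqrt (t - u))) \<and>
        prob_space.indep_set M (sets (F u))
          {(\<lambda>\<omega>. W t \<omega> - W u \<omega>) -` B \<inter> space M | B. B \<in> sets borel})"

text \<open>Harris flow with infinitesimal covariance phi and drift a on the probability space M.
  X s t \<omega> is the random map X_{s,t}; it is only used for 0 \<le> s \<le> t.\<close>
definition harris_flow ::
  "'a measure \<Rightarrow> (real \<Rightarrow> real) \<Rightarrow> (real \<Rightarrow> real) \<Rightarrow> (real \<Rightarrow> real \<Rightarrow> 'a \<Rightarrow> real \<Rightarrow> real) \<Rightarrow> bool" where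
  "harris_flow M \<phi> a X \<longleftrightarrow>
     prob_space M \<and>
     \<comment> \<open>random elements of D-up(R)\<close>
     (\<forall>s t. 0 \<le> s \<and> s \<le> t \<longrightarrow>
        (\<forall>\<omega>\<in>space M. cadlag_nondecr (X s t \<omega>)) \<and>
        (\<forall>y. (\<lambda>\<omega>. X s t \<omega> y) \<in> borel_measurable M)) \<and>
     \<comment> \<open>(i) cocycle property\<close>
     (\<forall>s. 0 \<le> s \<longrightarrow> (\<forall>\<omega>\<in>space M. X s s \<omega> = id)) \<and>
     (\<forall>s t r. 0 \<le> s \<and> s \<le> t \<and> t \<le> r \<longrightarrow>
        (AE \<omega> in M. X s r \<omega> = X t r \<omega> \<circ> X s t \<omega>)) \<and>
     \<comment> \<open>(ii) independent increments over consecutive intervals\<close>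
     (\<forall>(n::nat) (tt::nat \<Rightarrow> real). 0 \<le> tt 0 \<and> (\<forall>i<n. tt i \<le> tt (Suc i)) \<longrightarrow>
        prob_space.indep_sets M
          (\<lambda>i. sigma_sets (space M)
             {(\<lambda>\<omega>. X (tt i) (tt (Suc i)) \<omega> y) -` B \<inter> space M | y B. B \<in> sets borel})
          {..<n}) \<and>
     \<comment> \<open>(iii) stationarity in law\<close>
     (\<forall>s t. 0 \<le> s \<and> s \<le> t \<longrightarrow>
        distr M (Pi\<^sub>M UNIV (\<lambda>_. borel)) (X s t) = distr M (Pi\<^sub>M UNIV (\<lambda>_. borel)) (X 0 (t - s))) \<and>
     \<comment> \<open>(iv) X_{0,h} \<rightarrow> Id in probability (J1 = locally uniform, since Id is continuous)\<close>
     (\<forall>N>0. \<forall>\<epsilon>>0.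
        ((\<lambda>h. measure M {\<omega>\<in>space M. \<exists>x. \<bar>x\<bar> \<le> N \<and> \<bar>X 0 h \<omega> x - x\<bar> > \<epsilon>}) \<longlongrightarrow> 0)
          (at_right 0)) \<and>
     \<comment> \<open>(v) the martingale parts are Wiener processes\<close>
     (\<forall>x s. 0 \<le> s \<longrightarrow>
        wiener_from M (flow_filtration M X s) s
          (\<lambda>t \<omega>. X s t \<omega> x - x - (LBINT r=s..t. a (X s r \<omega> x)))) \<and>
     \<comment> \<open>(vi) joint quadratic covariation\<close>
     (\<forall>x y s. 0 \<le> s \<longrightarrow>
        martingale_from M (flow_filtration M X s) s
          (\<lambda>t \<omega>. (X s t \<omega> x - x - (LBINT r=s..t. a (X s r \<omega> x))) *
                 (X s t \<omega> y - y - (LBINT r=s..t. a (X s r \<omega> y)))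
                 - (LBINT r=s..t. \<phi> (X s r \<omega> x - X s r \<omega> y))))"

end

theory Submission
  imports Defs
begin

(*
  A trajectory t \<mapsto> X_{s,t}(y) solves g(t) = y + w(t) + \<integral>_s^t a(g) with a continuous Wiener
  process w. As a grows at most linearly, g is continuous, and over a time step of length H it
  moves by at most sup |w| + O(H); by Ottaviani's inequality and the fourth Gaussian moment,
  sup |w| is large on such a step with probability O(H^2). On a space-time grid of time mesh h
  there are O(1/h) time points, and finitely many space points once the flow started from
  \<plusminus>(N+1) is confined to a bounded window; so off an event of small probability no grid
  trajectory moves much within a time step. Monotonicity and the cocycle property of the maps
  X_{s,t} carry this to all rational times and all starting points, and right-continuity in
  space and continuity in time at rational points carry it to all times. Letting the
  probability of the exceptional event tend to zero gives the claim almost surely.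
*)

section \<open>Integral equations with a drift of linear growth\<close>

lemma interval_integral_eq_if_integrable:
  fixes f :: "real \<Rightarrow> real"
  assumes "s \<le> t"
  shows "(LBINT r=s..t. f r) = (if set_integrable lborel {s..t} f then integral {s..t} f else 0)"
proof (cases "set_integrable lborel {s..t} f")
  case True
  then show ?thesis
    using assms by (simp add: interval_integral_Icc set_borel_integral_eq_integral)
next
  case False
  then show ?thesis
    using assms by (simp add: interval_integral_Icc set_lebesgue_integral_def set_integrable_def
        not_integrable_integral_eq)
qed

lemma set_integrable_comp_bounded_continuous:
  fixes a g :: "real \<Rightarrow> real"
  assumes a: "a \<in> borel_measurable borel" and growth: "\<And>z. \<bar>a z\<bar> \<le> C * (1 + \<bar>z\<bar>)"
    and S: "S \<in> sets borel" "S \<subseteq> {u..v}"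
    and g: "continuous_on S g" "\<And>x. x \<in> S \<Longrightarrow> \<bar>g x\<bar> \<le> B"
  shows "set_integrable lborel S (\<lambda>x. a (g x))"
proof (rule set_integrable_bound[where f="\<lambda>_. C * (1 + B)"])
  show "set_integrable lborel S (\<lambda>_. C * (1 + B))"
    using S by (intro set_integrable_subset[OF borel_integrable_atLeastAtMost']) auto
  have "(\<lambda>x. indicator S x *\<^sub>R g x) \<in> borel_measurable borel"
    using borel_measurable_continuous_on_indicator[OF S(1) g(1)] .
  then have "(\<lambda>x. a (indicator S x *\<^sub>R g x)) \<in> borel_measurable borel"
    using a by (rule measurable_compose)
  then have "(\<lambda>x. indicator S x *\<^sub>R a (indicator S x *\<^sub>R g x)) \<in> borel_measurable borel"
    using S(1) by (intro borel_measurable_scaleR borel_measurable_indicator)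
  also have "(\<lambda>x. indicator S x *\<^sub>R a (indicator S x *\<^sub>R g x)) = (\<lambda>x. indicator S x *\<^sub>R a (g x))"
    by (auto simp: indicator_def fun_eq_iff)
  finally show "set_borel_measurable lborel S (\<lambda>x. a (g x))"
    by (simp add: set_borel_measurable_def)
  have "\<bar>a (g x)\<bar> \<le> C * (1 + B)" if "x \<in> S" for x
  proof -
    have "C * (1 + \<bar>g x\<bar>) \<le> C * (1 + B)"
      using g(2)[OF that] growth[of 0] by (intro mult_left_mono) auto
    then show ?thesis using growth[of "g x"] by linarith
  qed
  then show "AE x in lborel. x \<in> S \<longrightarrow> norm (a (g x)) \<le> norm (C * (1 + B))"
    by (auto intro: order.trans[OF _ abs_ge_self])
qed

lemma continuous_on_atLeastLessThan_if_atLeastAtMost: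
  fixes g :: "real \<Rightarrow> real"
  assumes "\<And>\<tau>. \<tau> < R \<Longrightarrow> continuous_on {s..\<tau>} g"
  shows "continuous_on {s..<R} g"
  unfolding continuous_on_eq_continuous_within
proof
  fix x assume x: "x \<in> {s..<R}"
  then obtain \<tau> where \<tau>: "x < \<tau>" "\<tau> < R" using dense by auto
  have "at x within {s..<R} = at x within {s..\<tau>}"
    using \<tau> x by (intro at_within_nhd[where S="{..<\<tau>}"]) auto
  then show "continuous (at x within {s..<R}) g"
    using assms[OF \<tau>(2)] x \<tau> by (simp add: continuous_on_eq_continuous_within)
qed

text \<open>At the point \<open>t0\<close> where \<open>m = |integral {u..t0} f|\<close> is maximal, the feedback gives
  \<open>m \<le> (A + C m) (v - u) \<le> A (v - u) + m/2\<close>.\<close>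
lemma integral_bound_of_linear_feedback:
  fixes f :: "real \<Rightarrow> real"
  assumes uv: "u \<le> v" and f: "f integrable_on {u..v}"
    and feedback: "\<And>\<tau>. \<tau> \<in> {u..v} \<Longrightarrow> \<bar>f \<tau>\<bar> \<le> A + C * \<bar>integral {u..\<tau>} f\<bar>"
    and C: "0 \<le> C" "C * (v - u) \<le> 1/2" and A: "0 \<le> A" and \<tau>: "\<tau> \<in> {u..v}"
  shows "\<bar>integral {u..\<tau>} f\<bar> \<le> 2 * (v - u) * A"
proof -
  have "continuous_on {u..v} (\<lambda>\<tau>. \<bar>integral {u..\<tau>} f\<bar>)"
    by (intro continuous_intros indefinite_integral_continuous_1 f)
  then obtain t0 where t0: "t0 \<in> {u..v}"
    and max: "\<And>\<tau>. \<tau> \<in> {u..v} \<Longrightarrow> \<bar>integral {u..\<tau>} f\<bar> \<le> \<bar>integral {u..t0} f\<bar>"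
    using continuous_attains_sup[OF compact_Icc] uv by force
  define m where "m = \<bar>integral {u..t0} f\<bar>"
  have "norm (integral {u..t0} f) \<le> (A + C * m) * Henstock_Kurzweil_Integration.content (cbox u t0)"
  proof (rule has_integral_bound)
    show "0 \<le> A + C * m" using A C by (simp add: m_def)
    show "(f has_integral integral {u..t0} f) (cbox u t0)"
      using integrable_subinterval_real[OF f] t0 by (auto simp: has_integral_integral)
    fix x assume "x \<in> cbox u t0"
    then have x: "x \<in> {u..v}" using t0 by auto
    have "C * \<bar>integral {u..x} f\<bar> \<le> C * m"
      using max[OF x] C(1) unfolding m_def by (rule mult_left_mono)
    then show "norm (f x) \<le> A + C * m" using feedback[OF x] by simp
  qed
  also have "\<dots> \<le> (A + C * m) * (v - u)"
    using t0 A C by (intro mult_left_mono) (auto simp: m_def)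
  also have "\<dots> = A * (v - u) + m * (C * (v - u))" by (simp add: algebra_simps)
  also have "\<dots> \<le> A * (v - u) + m * (1/2)"
    using C by (intro add_left_mono mult_left_mono) (auto simp: m_def)
  finally have "m \<le> 2 * (v - u) * A" by (simp add: m_def algebra_simps)
  then show ?thesis using max[OF \<tau>] by (simp add: m_def)
qed

lemma integral_equation_local_bound:
  fixes f g w :: "real \<Rightarrow> real"
  assumes uv: "u \<le> v" and f: "f integrable_on {u..v}"
    and eq: "\<And>\<tau>. \<tau> \<in> {u..v} \<Longrightarrow> g \<tau> = y + w \<tau> + integral {u..\<tau>} f"
    and growth: "\<And>\<tau>. \<tau> \<in> {u..v} \<Longrightarrow> \<bar>f \<tau>\<bar> \<le> C * (1 + \<bar>g \<tau>\<bar>)"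
    and w: "\<And>\<tau>. \<tau> \<in> {u..v} \<Longrightarrow> \<bar>w \<tau>\<bar> \<le> \<eta>"
    and C: "0 \<le> C" "C * (v - u) \<le> 1/2" and \<tau>: "\<tau> \<in> {u..v}"
  shows "\<bar>g \<tau> - y\<bar> \<le> \<eta> + 2 * (v - u) * (C * (1 + \<bar>y\<bar> + \<eta>))"
proof -
  have "0 \<le> \<eta>" using w[of u] uv by force
  have "\<bar>integral {u..\<tau>} f\<bar> \<le> 2 * (v - u) * (C * (1 + \<bar>y\<bar> + \<eta>))"
  proof (rule integral_bound_of_linear_feedback[OF uv f _ C _ \<tau>])
    fix r assume r: "r \<in> {u..v}"
    have "1 + \<bar>g r\<bar> \<le> (1 + \<bar>y\<bar> + \<eta>) + \<bar>integral {u..r} f\<bar>" using eq[OF r] w[OF r] by linarith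
    then have "C * (1 + \<bar>g r\<bar>) \<le> C * ((1 + \<bar>y\<bar> + \<eta>) + \<bar>integral {u..r} f\<bar>)"
      using C(1) by (rule mult_left_mono)
    then have "C * (1 + \<bar>g r\<bar>) \<le> C * (1 + \<bar>y\<bar> + \<eta>) + C * \<bar>integral {u..r} f\<bar>"
      by (simp add: distrib_left)
    then show "\<bar>f r\<bar> \<le> C * (1 + \<bar>y\<bar> + \<eta>) + C * \<bar>integral {u..r} f\<bar>"
      using growth[OF r] by linarith
  qed (use C \<open>0 \<le> \<eta>\<close> in auto)
  then show ?thesis using eq[OF \<tau>] w[OF \<tau>] by linarith
qed

locale drift_equation =
  fixes a W g :: "real \<Rightarrow> real" and s y C :: real
  assumes a_measurable: "a \<in> borel_measurable borel"
    and a_growth: "\<And>z. \<bar>a z\<bar> \<le> C * (1 + \<bar>z\<bar>)"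
    and W_continuous: "continuous_on {s..} W"
    and equation: "\<And>t. s \<le> t \<Longrightarrow> g t = y + W t + (LBINT r=s..t. a (g r))"
begin

lemma C_nonneg: "0 \<le> C"
proof -
  have "\<bar>a 0\<bar> \<le> C" using a_growth[of 0] by simp
  then show ?thesis by linarith
qed

lemma W_bounded:
  obtains K where "0 \<le> K" "\<And>\<tau>. \<tau> \<in> {s..t} \<Longrightarrow> \<bar>W \<tau>\<bar> \<le> K"
  using continuous_on_compact_bound[OF compact_Icc continuous_on_subset[OF W_continuous]]
  by (metis atLeastAtMost_iff atLeast_iff real_norm_def subsetI)

lemma equation_integral:
  assumes J: "set_integrable lborel {s..t} (\<lambda>r. a (g r))" and \<tau>: "\<tau> \<in> {s..t}"
  shows "g \<tau> = y + W \<tau> + integral {s..\<tau>} (\<lambda>r. a (g r))"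
proof -
  have "set_integrable lborel {s..\<tau>} (\<lambda>r. a (g r))"
    using \<tau> by (intro set_integrable_subset[OF J]) auto
  then show ?thesis
    using equation[of \<tau>] \<tau> interval_integral_eq_if_integrable[of s \<tau>] by auto
qed

lemma continuous_on_if_integrable:
  assumes J: "set_integrable lborel {s..t} (\<lambda>r. a (g r))"
  shows "continuous_on {s..t} g"
proof -
  have "(\<lambda>r. a (g r)) integrable_on {s..t}"
    using set_borel_integral_eq_integral(1)[OF J] .
  then have "continuous_on {s..t} (\<lambda>\<tau>. y + W \<tau> + integral {s..\<tau>} (\<lambda>r. a (g r)))"
    by (intro continuous_intros indefinite_integral_continuous_1 continuous_on_subset[OF W_continuous])
      auto
  then show ?thesis
    using equation_integral[OF J] by (auto intro: continuous_on_cong[THEN iffD1, rotated -1])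
qed

lemma increment_bound:
  assumes J: "set_integrable lborel {s..v} (\<lambda>r. a (g r))" and u: "s \<le> u" "u \<le> v"
    and short: "C * (v - u) \<le> 1/2" and W: "\<And>r. r \<in> {u..v} \<Longrightarrow> \<bar>W r - W u\<bar> \<le> \<eta>"
    and \<tau>: "\<tau> \<in> {u..v}"
  shows "\<bar>g \<tau> - g u\<bar> \<le> \<eta> + 2 * (v - u) * (C * (1 + \<bar>g u\<bar> + \<eta>))"
proof (rule integral_equation_local_bound[OF u(2) _ _ _ W C_nonneg short \<tau>])
  let ?f = "\<lambda>r. a (g r)"
  have f: "?f integrable_on {s..v}" using set_borel_integral_eq_integral(1)[OF J] .
  then show "?f integrable_on {u..v}" using integrable_subinterval_real[OF f] u by auto
  show "g r = g u + (W r - W u) + integral {u..r} ?f" if r: "r \<in> {u..v}" for r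
  proof -
    have "integral {s..r} ?f = integral {s..u} ?f + integral {u..r} ?f"
      using u r integrable_subinterval_real[OF f, of s r]
      by (intro Henstock_Kurzweil_Integration.integral_combine[symmetric]) auto
    then show ?thesis using equation_integral[OF J, of r] equation_integral[OF J, of u] u r by auto
  qed
qed (use a_growth in auto)

text \<open>Where the integrability of \<open>a \<circ> g\<close> could first break down, \<open>g\<close> stays bounded: just
  below that time, \<open>increment_bound\<close> applies on an interval of length \<open>1/(2C)\<close>.\<close>
lemma bounded_below_first_non_integrability:
  assumes J: "\<And>\<tau>. s \<le> \<tau> \<Longrightarrow> \<tau> < R \<Longrightarrow> set_integrable lborel {s..\<tau>} (\<lambda>r. a (g r))"
  obtains B where "\<And>\<tau>. \<tau> \<in> {s..<R} \<Longrightarrow> \<bar>g \<tau>\<bar> \<le> B"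
proof (cases "s < R")
  case False
  then show ?thesis using that by fastforce
next
  case True
  define u where "u = max s (R - 1 / (2 * (C + 1)))"
  have u: "s \<le> u" "u < R" using True C_nonneg by (auto simp: u_def)
  have short: "2 * C * (\<tau> - u) \<le> 1" if "\<tau> < R" for \<tau>
  proof -
    have "2 * C * (\<tau> - u) \<le> 2 * C * (1 / (2 * (C + 1)))"
      using that C_nonneg by (intro mult_left_mono) (auto simp: u_def)
    also have "\<dots> \<le> 1" using C_nonneg by (simp add: field_simps)
    finally show ?thesis .
  qed
  obtain KG where KG: "0 \<le> KG" "\<And>\<tau>. \<tau> \<in> {s..u} \<Longrightarrow> \<bar>g \<tau>\<bar> \<le> KG"
    using continuous_on_compact_bound[OF compact_Icc continuous_on_if_integrable[OF J[OF u]]]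
    by (metis real_norm_def)
  obtain KW where KW: "0 \<le> KW" "\<And>\<tau>. \<tau> \<in> {s..R} \<Longrightarrow> \<bar>W \<tau>\<bar> \<le> KW" using W_bounded by blast
  have gu: "\<bar>g u\<bar> \<le> KG" using KG(2) u by simp
  define B where "B = KG + 2 * KW + (1 + KG + 2 * KW)"
  have "\<bar>g \<tau>\<bar> \<le> B" if \<tau>: "u \<le> \<tau>" "\<tau> < R" for \<tau>
  proof -
    have J\<tau>: "set_integrable lborel {s..\<tau>} (\<lambda>r. a (g r))" using J u \<tau> by simp
    have W: "\<bar>W r - W u\<bar> \<le> 2 * KW" if "r \<in> {u..\<tau>}" for r
    proof -
      have "r \<in> {s..R}" "u \<in> {s..R}" using that u \<tau> by auto
      then show ?thesis using KW(2)[of r] KW(2)[of u] abs_triangle_ineq4[of "W r" "W u"] by linarith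
    qed
    have "C * (\<tau> - u) \<le> 1/2" using short[OF \<tau>(2)] by linarith
    then have "\<bar>g \<tau> - g u\<bar> \<le> 2 * KW + 2 * (\<tau> - u) * (C * (1 + \<bar>g u\<bar> + 2 * KW))"
      using increment_bound[OF J\<tau> u(1) \<tau>(1) _ W] \<tau>(1) by simp
    also have "\<dots> = 2 * KW + (2 * C * (\<tau> - u)) * (1 + \<bar>g u\<bar> + 2 * KW)"
      by (simp add: algebra_simps)
    also have "\<dots> \<le> 2 * KW + 1 * (1 + KG + 2 * KW)"
    proof (intro add_left_mono mult_mono)
      show "1 + \<bar>g u\<bar> + 2 * KW \<le> 1 + KG + 2 * KW" using gu by simp
    qed (use short[OF \<tau>(2)] KW(1) in auto)
    also have "\<dots> = 2 * KW + (1 + KG + 2 * KW)" by simp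
    finally show ?thesis
      using gu abs_triangle_ineq2[of "g \<tau>" "g u"] unfolding B_def by linarith
  qed
  moreover have "\<bar>g \<tau>\<bar> \<le> B" if "\<tau> \<in> {s..u}" for \<tau>
    using KG(1) KG(2)[OF that] KW(1) unfolding B_def by linarith
  ultimately have "\<bar>g \<tau>\<bar> \<le> B" if "\<tau> \<in> {s..<R}" for \<tau>
    using that by (cases "\<tau> \<le> u") auto
  then show ?thesis using that by blast
qed

lemma integrable_across:
  assumes R: "s \<le> R" "R \<le> t"
    and J_below: "\<And>\<tau>. s \<le> \<tau> \<Longrightarrow> \<tau> < R \<Longrightarrow> set_integrable lborel {s..\<tau>} (\<lambda>r. a (g r))"
    and g_above: "\<And>\<tau>. R < \<tau> \<Longrightarrow> \<tau> \<le> t \<Longrightarrow> g \<tau> = y + W \<tau>"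
  shows "set_integrable lborel {s..t} (\<lambda>r. a (g r))"
proof -
  obtain B where B: "\<And>\<tau>. \<tau> \<in> {s..<R} \<Longrightarrow> \<bar>g \<tau>\<bar> \<le> B"
    using bounded_below_first_non_integrability J_below by blast
  obtain KW where KW: "\<And>\<tau>. \<tau> \<in> {s..t} \<Longrightarrow> \<bar>W \<tau>\<bar> \<le> KW" using W_bounded by blast
  have cont_below: "continuous_on {s..\<tau>} g" if "\<tau> < R" for \<tau>
    using continuous_on_if_integrable[OF J_below[OF _ that]] by (cases "s \<le> \<tau>") auto
  have left: "set_integrable lborel {s..<R} (\<lambda>r. a (g r))"
  proof (rule set_integrable_comp_bounded_continuous[OF a_measurable a_growth])
    show "{s..<R} \<subseteq> {s..R}" by auto
    show "continuous_on {s..<R} g" by (rule continuous_on_atLeastLessThan_if_atLeastAtMost[OF cont_below])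
  qed (use B in auto)
  have "continuous_on {R<..t} (\<lambda>\<tau>. y + W \<tau>)"
    using R by (intro continuous_intros continuous_on_subset[OF W_continuous]) auto
  then have "continuous_on {R<..t} g"
    using g_above by (auto intro: continuous_on_cong[THEN iffD1, rotated -1])
  moreover have "\<bar>g \<tau>\<bar> \<le> \<bar>y\<bar> + KW" if "\<tau> \<in> {R<..t}" for \<tau>
    using that g_above[of \<tau>] KW[of \<tau>] R by auto
  ultimately have right: "set_integrable lborel {R<..t} (\<lambda>r. a (g r))"
    by (intro set_integrable_comp_bounded_continuous[OF a_measurable a_growth, of _ R t]) auto
  have point: "set_integrable lborel {R} (\<lambda>r. a (g r))"
    by (rule set_integrable_comp_bounded_continuous[OF a_measurable a_growth, of _ R R _ "\<bar>g R\<bar>"]) auto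
  have "{s..t} = ({s..<R} \<union> {R}) \<union> {R<..t}" using R by auto
  then show ?thesis using set_integrable_Un[OF set_integrable_Un[OF left point] right] by simp
qed

text \<open>\<open>LBINT\<close> is \<open>0\<close> for a non-integrable integrand, so the equation alone does not say that
  \<open>a \<circ> g\<close> is integrable. But past the supremum \<open>R\<close> of the times up to which it is integrable,
  \<open>g = y + W\<close>, and \<open>integrable_across\<close> then shows integrability beyond \<open>R\<close>.\<close>
lemma integrable: "set_integrable lborel {s..t} (\<lambda>r. a (g r))"
proof (rule ccontr)
  let ?J = "\<lambda>t. set_integrable lborel {s..t} (\<lambda>r. a (g r))"
  assume not_J: "\<not> ?J t"
  have "?J s"
    by (rule set_integrable_comp_bounded_continuous[OF a_measurable a_growth, of _ s s _ "\<bar>g s\<bar>"]) auto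
  have st: "s \<le> t"
  proof (rule ccontr)
    assume "\<not> s \<le> t"
    then have "?J t" by (simp add: set_integrable_def)
    with not_J show False ..
  qed
  define R where "R = Sup {\<tau> \<in> {s..t}. ?J \<tau>}"
  have s_in: "s \<in> {\<tau> \<in> {s..t}. ?J \<tau>}" using \<open>?J s\<close> st by simp
  have ne: "{\<tau> \<in> {s..t}. ?J \<tau>} \<noteq> {}" using s_in by blast
  have bdd: "bdd_above {\<tau> \<in> {s..t}. ?J \<tau>}" by (auto intro: bdd_aboveI[of _ t])
  have "R \<le> t" unfolding R_def by (rule cSup_least[OF ne]) auto
  then have R: "s \<le> R" "R \<le> t" using cSup_upper[OF s_in bdd] by (simp_all add: R_def)
  have "?J \<tau>" if "s \<le> \<tau>" "\<tau> < R" for \<tau>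
  proof -
    obtain \<tau>' where "\<tau>' \<in> {\<tau> \<in> {s..t}. ?J \<tau>}" "\<tau> < \<tau>'"
      using less_cSupD[OF ne] \<open>\<tau> < R\<close> unfolding R_def by blast
    then show ?thesis using that by (auto intro: set_integrable_subset)
  qed
  moreover have "g \<tau> = y + W \<tau>" if "R < \<tau>" "\<tau> \<le> t" for \<tau>
  proof -
    have "\<not> ?J \<tau>"
      using that R cSup_upper[OF _ bdd, of \<tau>] unfolding R_def by force
    then show ?thesis using equation[of \<tau>] interval_integral_eq_if_integrable[of s \<tau>] that R by simp
  qed
  ultimately have "?J t" using integrable_across[OF R] by blast
  with not_J show False ..
qed

lemma continuous: "continuous_on {s..t} g"
  using continuous_on_if_integrable[OF integrable] .

lemma local_bound:
  assumes H: "0 \<le> H" "C * H \<le> 1/2" and y: "\<bar>y\<bar> \<le> Mb"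
    and W: "\<And>r. r \<in> {s..s+H} \<Longrightarrow> \<bar>W r\<bar> \<le> \<eta>" and r: "r \<in> {s..s+H}"
  shows "\<bar>g r - y\<bar> \<le> \<eta> + 2 * H * (C * (1 + Mb + \<eta>))"
proof -
  have "\<bar>g r - y\<bar> \<le> \<eta> + 2 * (s + H - s) * (C * (1 + \<bar>y\<bar> + \<eta>))"
  proof (rule integral_equation_local_bound[OF _ _ equation_integral[OF integrable] _ W _ _ r])
    show "(\<lambda>r. a (g r)) integrable_on {s..s + H}"
      using set_borel_integral_eq_integral(1)[OF integrable] .
  qed (use H a_growth C_nonneg in auto)
  also have "\<dots> = \<eta> + 2 * H * (C * (1 + \<bar>y\<bar> + \<eta>))" by simp
  also have "\<dots> \<le> \<eta> + 2 * H * (C * (1 + Mb + \<eta>))"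
    using H y C_nonneg by (intro add_left_mono mult_left_mono) auto
  finally show ?thesis .
qed

end

section \<open>A maximal inequality for Wiener processes\<close>

lemma (in prob_space) normal_fourth_moment_tail:
  fixes Z :: "'a \<Rightarrow> real"
  assumes Z: "distributed M lborel Z (normal_density 0 \<sigma>)" and \<sigma>: "0 < \<sigma>" and c: "0 < c"
  shows "prob {\<omega>\<in>space M. c \<le> \<bar>Z \<omega>\<bar>} \<le> 3 * \<sigma>^4 / c^4"
proof -
  have "has_bochner_integral lborel (\<lambda>x. normal_density 0 \<sigma> x * (x - 0)^(2*2))
      (fact (2*2) / ((2/\<sigma>\<^sup>2)^2 * fact 2))"
    by (rule normal_moment_even[OF \<sigma>])
  also have "(fact (2*2) / ((2/\<sigma>\<^sup>2)^2 * fact 2) :: real) = 3 * \<sigma>^4"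
    using \<sigma> by (simp add: fact_numeral field_simps power2_eq_square numeral_eq_Suc)
  finally have moment: "has_bochner_integral lborel (\<lambda>x. normal_density 0 \<sigma> x * x^4) (3 * \<sigma>^4)"
    by simp
  have "integrable M (\<lambda>\<omega>. (Z \<omega>)^4)"
    using distributed_integrable[OF Z, of "\<lambda>x. x^4"] moment by (simp add: has_bochner_integral_iff)
  moreover have "expectation (\<lambda>\<omega>. (Z \<omega>)^4) = 3 * \<sigma>^4"
    using distributed_integral[OF Z, of "\<lambda>x. x^4"] moment by (simp add: has_bochner_integral_iff)
  moreover have "c \<le> \<bar>z\<bar> \<longleftrightarrow> c^4 \<le> z^4" for z :: real
    using c power_mono_iff[of c "\<bar>z\<bar>" 4] by simp
  ultimately show ?thesis
    using c integral_Markov_inequality_measure[where M=M and u="\<lambda>\<omega>. (Z \<omega>)^4" and A="space M"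
        and c="c^4"] by simp
qed

lemma first_exceedance_partition:
  fixes x :: "nat \<Rightarrow> 'a \<Rightarrow> real" and b :: real and \<Omega> :: "'a set"
  defines "E \<equiv> \<lambda>k. {\<omega> \<in> \<Omega>. b < \<bar>x k \<omega>\<bar> \<and> (\<forall>j\<in>{..<k}. \<bar>x j \<omega>\<bar> \<le> b)}"
  shows "disjoint_family E" and "{\<omega> \<in> \<Omega>. \<exists>k\<le>n. b < \<bar>x k \<omega>\<bar>} = (\<Union>k\<le>n. E k)"
proof -
  have disjoint: "E k \<inter> E l = {}" if "k < l" for k l
  proof (rule equals0I)
    fix \<omega> assume \<omega>: "\<omega> \<in> E k \<inter> E l"
    then have "\<bar>x k \<omega>\<bar> \<le> b" using that by (simp add: E_def)
    moreover have "b < \<bar>x k \<omega>\<bar>" using \<omega> by (simp add: E_def)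
    ultimately show False by linarith
  qed
  show "disjoint_family E"
    unfolding disjoint_family_on_def
  proof (intro ballI impI)
    fix k l :: nat assume "k \<noteq> l"
    then show "E k \<inter> E l = {}"
      using disjoint[of k l] disjoint[of l k] by (cases "k < l") auto
  qed
  have first: "\<omega> \<in> (\<Union>k\<le>n. E k)" if "\<omega> \<in> \<Omega>" "k \<le> n" "b < \<bar>x k \<omega>\<bar>" for \<omega> k
  proof -
    define k0 where "k0 = (LEAST k. b < \<bar>x k \<omega>\<bar>)"
    have "b < \<bar>x k0 \<omega>\<bar>"
      unfolding k0_def by (rule LeastI[where P="\<lambda>k. b < \<bar>x k \<omega>\<bar>", OF that(3)])
    moreover have "k0 \<le> k"
      unfolding k0_def by (rule Least_le[where P="\<lambda>k. b < \<bar>x k \<omega>\<bar>", OF that(3)])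
    moreover have "\<bar>x j \<omega>\<bar> \<le> b" if "j < k0" for j
      using not_less_Least[OF that[unfolded k0_def]] by simp
    ultimately have "\<omega> \<in> E k0" "k0 \<le> n" using that by (auto simp: E_def)
    then show ?thesis by blast
  qed
  show "{\<omega> \<in> \<Omega>. \<exists>k\<le>n. b < \<bar>x k \<omega>\<bar>} = (\<Union>k\<le>n. E k)"
  proof
    show "{\<omega> \<in> \<Omega>. \<exists>k\<le>n. b < \<bar>x k \<omega>\<bar>} \<subseteq> (\<Union>k\<le>n. E k)" using first by blast
    show "(\<Union>k\<le>n. E k) \<subseteq> {\<omega> \<in> \<Omega>. \<exists>k\<le>n. b < \<bar>x k \<omega>\<bar>}" by (auto simp: E_def)
  qed
qed

lemma first_exceedance_measurable:
  fixes x :: "nat \<Rightarrow> 'a \<Rightarrow> real"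
  assumes x: "\<And>j. j \<le> k \<Longrightarrow> x j \<in> borel_measurable N"
  shows "{\<omega>\<in>space N. b < \<bar>x k \<omega>\<bar> \<and> (\<forall>j\<in>{..<k}. \<bar>x j \<omega>\<bar> \<le> b)} \<in> sets N"
proof -
  have [measurable]: "x k \<in> borel_measurable N" using x by simp
  have "{\<omega>\<in>space N. \<forall>j\<in>{..<k}. \<bar>x j \<omega>\<bar> \<le> b} \<in> sets N"
  proof (rule sets.sets_Collect_countable_All')
    fix j assume "j \<in> {..<k}"
    then have [measurable]: "x j \<in> borel_measurable N" using x by simp
    show "{\<omega>\<in>space N. \<bar>x j \<omega>\<bar> \<le> b} \<in> sets N" by measurable
  qed auto
  moreover have "{\<omega>\<in>space N. b < \<bar>x k \<omega>\<bar>} \<in> sets N" by measurable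
  ultimately have "{\<omega>\<in>space N. b < \<bar>x k \<omega>\<bar>} \<inter> {\<omega>\<in>space N. \<forall>j\<in>{..<k}. \<bar>x j \<omega>\<bar> \<le> b} \<in> sets N"
    by blast
  moreover have "{\<omega>\<in>space N. b < \<bar>x k \<omega>\<bar>} \<inter> {\<omega>\<in>space N. \<forall>j\<in>{..<k}. \<bar>x j \<omega>\<bar> \<le> b}
      = {\<omega>\<in>space N. b < \<bar>x k \<omega>\<bar> \<and> (\<forall>j\<in>{..<k}. \<bar>x j \<omega>\<bar> \<le> b)}"
    by blast
  ultimately show ?thesis by simp
qed

text \<open>On the event \<open>E k\<close> that \<open>|S|\<close> first exceeds \<open>2a\<close> at step \<open>k\<close>, \<open>|S n| > a\<close> unless the
  increment \<open>S n - S k\<close>, which is independent of \<open>E k\<close>, exceeds \<open>a\<close>.\<close>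
lemma ottaviani_inequality:
  fixes S :: "nat \<Rightarrow> 'a \<Rightarrow> real" and G :: "nat \<Rightarrow> 'a measure"
  assumes "prob_space M"
    and sub: "\<And>k. k \<le> n \<Longrightarrow> subalgebra M (G k)"
    and adapted: "\<And>j k. j \<le> k \<Longrightarrow> k \<le> n \<Longrightarrow> S j \<in> borel_measurable (G k)"
    and indep: "\<And>k A. k \<le> n \<Longrightarrow> A \<in> sets (G k) \<Longrightarrow>
        measure M (A \<inter> {\<omega>\<in>space M. \<bar>S n \<omega> - S k \<omega>\<bar> \<le> a}) =
        measure M A * measure M {\<omega>\<in>space M. \<bar>S n \<omega> - S k \<omega>\<bar> \<le> a}"
    and tail: "\<And>k. k \<le> n \<Longrightarrow> measure M {\<omega>\<in>space M. a < \<bar>S n \<omega> - S k \<omega>\<bar>} \<le> c"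
    and less_1: "c < 1"
  shows "measure M {\<omega>\<in>space M. \<exists>k\<le>n. 2*a < \<bar>S k \<omega>\<bar>}
    \<le> measure M {\<omega>\<in>space M. a < \<bar>S n \<omega>\<bar>} / (1 - c)"
proof -
  interpret prob_space M by fact
  have G: "sets (G k) \<subseteq> sets M" "space (G k) = space M" if "k \<le> n" for k
    using sub[OF that] by (auto simp: subalgebra_def)
  define E where "E = (\<lambda>k. {\<omega>\<in>space M. 2*a < \<bar>S k \<omega>\<bar> \<and> (\<forall>j\<in>{..<k}. \<bar>S j \<omega>\<bar> \<le> 2*a)})"
  define B where "B = (\<lambda>k. {\<omega>\<in>space M. \<bar>S n \<omega> - S k \<omega>\<bar> \<le> a})"
  have S_M: "S j \<in> borel_measurable M" if "j \<le> n" for j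
    using measurable_from_subalg[OF sub[OF order.refl] adapted[OF that order.refl]] .
  have E_G: "E k \<in> sets (G k)" if k: "k \<le> n" for k
  proof -
    have "{\<omega>\<in>space (G k). 2*a < \<bar>S k \<omega>\<bar> \<and> (\<forall>j\<in>{..<k}. \<bar>S j \<omega>\<bar> \<le> 2*a)} \<in> sets (G k)"
      by (rule first_exceedance_measurable) (use adapted k in auto)
    then show ?thesis using G(2)[OF k] by (simp add: E_def)
  qed
  have E_M: "E k \<in> events" if "k \<le> n" for k using E_G[OF that] G[OF that] by auto
  have B_M: "B k \<in> events" if "k \<le> n" for k
    unfolding B_def using S_M[of n] S_M[of k] that by measurable
  note partition = first_exceedance_partition[where b="2*a" and \<Omega>="space M" and x=S, folded E_def]
  have disj: "disjoint_family_on E {..n}"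
    using disjoint_family_on_mono[OF subset_UNIV partition(1)] .
  have Un: "{\<omega>\<in>space M. \<exists>k\<le>n. 2*a < \<bar>S k \<omega>\<bar>} = (\<Union>k\<in>{..n}. E k)"
    using partition(2) by simp
  have sub: "(\<Union>k\<in>{..n}. E k \<inter> B k) \<subseteq> {\<omega>\<in>space M. a < \<bar>S n \<omega>\<bar>}"
    by (auto simp: E_def B_def)
  have disj2: "disjoint_family_on (\<lambda>k. E k \<inter> B k) {..n}"
    using disj unfolding disjoint_family_on_def by blast
  have "(\<Sum>k\<in>{..n}. prob (E k) * (1 - c)) \<le> (\<Sum>k\<in>{..n}. prob (E k \<inter> B k))"
  proof (rule sum_mono)
    fix k assume k: "k \<in> {..n}"
    have "prob (B k) = 1 - prob (space M - B k)" using prob_compl[OF B_M] k by simp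
    also have "space M - B k = {\<omega>\<in>space M. a < \<bar>S n \<omega> - S k \<omega>\<bar>}" by (auto simp: B_def)
    finally have "1 - c \<le> prob (B k)" using tail[of k] k by simp
    then have "prob (E k) * (1 - c) \<le> prob (E k) * prob (B k)" by (intro mult_left_mono) auto
    also have "\<dots> = prob (E k \<inter> B k)" using indep[OF _ E_G, of k] k by (simp add: B_def)
    finally show "prob (E k) * (1 - c) \<le> prob (E k \<inter> B k)" .
  qed
  also have "\<dots> = prob (\<Union>k\<in>{..n}. E k \<inter> B k)"
    using E_M B_M by (intro finite_measure_finite_Union[symmetric] disj2) auto
  also have "\<dots> \<le> prob {\<omega>\<in>space M. a < \<bar>S n \<omega>\<bar>}"
    using sub S_M[of n] by (intro finite_measure_mono) (auto, measurable)
  moreover have "prob (\<Union>k\<in>{..n}. E k) = (\<Sum>k\<in>{..n}. prob (E k))"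
    using E_M by (intro finite_measure_finite_Union disj) auto
  ultimately have "prob (\<Union>k\<in>{..n}. E k) * (1 - c) \<le> prob {\<omega>\<in>space M. a < \<bar>S n \<omega>\<bar>}"
    by (simp add: sum_distrib_right)
  then show ?thesis using Un less_1 by (simp add: field_simps)
qed

lemma continuous_bound_from_dyadics:
  fixes w :: "real \<Rightarrow> real"
  assumes w: "continuous_on {s..s+H} w" and H: "0 < H"
    and bound: "\<And>m k. k \<le> 2^m \<Longrightarrow> \<bar>w (s + H * real k / 2^m)\<bar> \<le> b"
    and r: "r \<in> {s..s+H}"
  shows "\<bar>w r\<bar> \<le> b"
proof -
  let ?D = "{0..1} \<inter> (\<Union>k m. {real m / 2^k :: real})"
  have closure: "closure ?D = {0..1}"
    using closure_dyadic_rationals_in_convex_set_pos_1[of "{0..1::real}"] by simp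
  have "continuous_on {0..1} (\<lambda>x. w (s + H * x))"
    using H by (intro continuous_on_compose2[OF w] continuous_intros)
      (auto simp: mult_le_cancel_left1)
  moreover have "\<forall>x\<in>?D. norm (w (s + H * x)) \<le> b"
  proof clarify
    fix k m assume "real m / 2^k \<in> {0..1::real}"
    then have "m \<le> 2^k" by (simp add: field_simps)
    then show "norm (w (s + H * (real m / 2^k))) \<le> b" using bound by simp
  qed
  moreover have "(r - s) / H \<in> {0..1}" using r H by (auto simp: field_simps)
  ultimately have "norm (w (s + H * ((r - s) / H))) \<le> b"
    using continuous_on_closure_norm_le[of ?D] unfolding closure by blast
  then show ?thesis using H by simp
qed

lemma wiener_fromD:
  assumes "wiener_from M F s W"
  shows "\<And>t. s \<le> t \<Longrightarrow> W t \<in> borel_measurable (F t)"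
    and "\<And>\<omega>. \<omega> \<in> space M \<Longrightarrow> W s \<omega> = 0"
    and "AE \<omega> in M. continuous_on {s..} (\<lambda>t. W t \<omega>)"
    and "\<And>u t. s \<le> u \<Longrightarrow> u < t \<Longrightarrow>
      distributed M lborel (\<lambda>\<omega>. W t \<omega> - W u \<omega>) (normal_density 0 (sqrt (t - u)))"
    and "\<And>u t. s \<le> u \<Longrightarrow> u < t \<Longrightarrow> prob_space.indep_set M (sets (F u))
      {(\<lambda>\<omega>. W t \<omega> - W u \<omega>) -` B \<inter> space M | B. B \<in> sets borel}"
  using assms unfolding wiener_from_def by blast+

lemma wiener_increment_tail:
  assumes "prob_space M" and W: "wiener_from M F s W" and sub: "\<And>t. subalgebra M (F t)"
    and ut: "s \<le> u" "u \<le> t" and a: "0 < a"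
  shows "measure M {\<omega>\<in>space M. a < \<bar>W t \<omega> - W u \<omega>\<bar>} \<le> 3 * (t - u)^2 / a^4"
proof (cases "u = t")
  case True
  then show ?thesis using a by simp
next
  case False
  interpret prob_space M by fact
  have ut': "u < t" using ut False by simp
  have [measurable]: "W r \<in> borel_measurable M" if "s \<le> r" for r
    using measurable_from_subalg[OF sub wiener_fromD(1)[OF W that]] .
  have "prob {\<omega>\<in>space M. a < \<bar>W t \<omega> - W u \<omega>\<bar>} \<le> prob {\<omega>\<in>space M. a \<le> \<bar>W t \<omega> - W u \<omega>\<bar>}"
    using ut by (intro finite_measure_mono) (auto, measurable)
  also have "\<dots> \<le> 3 * (sqrt (t - u))^4 / a^4"
    by (rule normal_fourth_moment_tail[OF wiener_fromD(4)[OF W ut(1) ut']]) (use ut' a in auto)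
  also have "(sqrt (t - u))^4 = ((sqrt (t - u))^2)^2" by (simp flip: power_mult)
  also have "\<dots> = (t - u)^2" using ut' by simp
  finally show ?thesis .
qed

lemma wiener_grid_maximal:
  fixes \<tau> :: "nat \<Rightarrow> real"
  assumes "prob_space M" and W: "wiener_from M F s W" and sub: "\<And>t. subalgebra M (F t)"
    and F_mono: "\<And>u t. u \<le> t \<Longrightarrow> sets (F u) \<subseteq> sets (F t)"
    and \<tau>: "\<And>j k. j \<le> k \<Longrightarrow> \<tau> j \<le> \<tau> k" "s \<le> \<tau> 0" "\<tau> n \<le> s + H"
    and a: "0 < a" and small: "3 * H^2 / a^4 \<le> 1/2"
  shows "measure M {\<omega>\<in>space M. \<exists>k\<le>n. 2*a < \<bar>W (\<tau> k) \<omega>\<bar>} \<le> 6 * H^2 / a^4"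
proof -
  interpret prob_space M by fact
  define c where "c = 3 * H^2 / a^4"
  have \<tau>_s: "s \<le> \<tau> k" for k using \<tau>(1)[of 0 k] \<tau>(2) by simp
  have tail: "prob {\<omega>\<in>space M. a < \<bar>W t \<omega> - W u \<omega>\<bar>} \<le> c" if "s \<le> u" "u \<le> t" "t \<le> s + H" for u t
  proof -
    have "(t - u)^2 \<le> H^2" using that by (intro power_mono) auto
    then have "3 * (t - u)^2 / a^4 \<le> c" unfolding c_def using a by (intro divide_right_mono) auto
    then show ?thesis using wiener_increment_tail[OF \<open>prob_space M\<close> W sub that(1,2) a] by simp
  qed
  have "prob {\<omega>\<in>space M. \<exists>k\<le>n. 2*a < \<bar>W (\<tau> k) \<omega>\<bar>} \<le> prob {\<omega>\<in>space M. a < \<bar>W (\<tau> n) \<omega>\<bar>} / (1 - c)"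
  proof (rule ottaviani_inequality[OF \<open>prob_space M\<close>, where G="\<lambda>k. F (\<tau> k)"])
    show "subalgebra M (F (\<tau> k))" for k by (rule sub)
    show "W (\<tau> j) \<in> borel_measurable (F (\<tau> k))" if "j \<le> k" for j k
      using wiener_fromD(1)[OF W \<tau>_s] F_mono[OF \<tau>(1)[OF that]] sub
      by (auto simp: measurable_def subalgebra_def)
    show "prob {\<omega>\<in>space M. a < \<bar>W (\<tau> n) \<omega> - W (\<tau> k) \<omega>\<bar>} \<le> c" if "k \<le> n" for k
      using tail[OF \<tau>_s \<tau>(1)[OF that] \<tau>(3)] .
    show "c < 1" using small by (simp add: c_def)
    fix k A assume k: "k \<le> n" and A: "A \<in> sets (F (\<tau> k))"
    let ?B = "{\<omega>\<in>space M. \<bar>W (\<tau> n) \<omega> - W (\<tau> k) \<omega>\<bar> \<le> a}"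
    show "prob (A \<inter> ?B) = prob A * prob ?B"
    proof (cases "\<tau> k < \<tau> n")
      case True
      have "?B = (\<lambda>\<omega>. W (\<tau> n) \<omega> - W (\<tau> k) \<omega>) -` {x. \<bar>x\<bar> \<le> a} \<inter> space M" by auto
      moreover have "{x::real. \<bar>x\<bar> \<le> a} \<in> sets borel" by measurable
      ultimately show ?thesis
        using indep_setD[OF wiener_fromD(5)[OF W \<tau>_s True] A] by blast
    next
      case False
      then have "\<tau> k = \<tau> n" using \<tau>(1)[OF k] by simp
      then have "?B = space M" using a by auto
      moreover have "A \<subseteq> space M" using sets.sets_into_space[OF A] sub by (auto simp: subalgebra_def)
      ultimately show ?thesis by (simp add: Int_absorb2 prob_space)
    qed
  qed
  also have "{\<omega>\<in>space M. a < \<bar>W (\<tau> n) \<omega>\<bar>} = {\<omega>\<in>space M. a < \<bar>W (\<tau> n) \<omega> - W s \<omega>\<bar>}"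
    using wiener_fromD(2)[OF W] by auto
  also have "prob \<dots> / (1 - c) \<le> c / (1 - c)"
    using tail[OF order.refl \<tau>_s \<tau>(3)] small by (intro divide_right_mono) (auto simp: c_def)
  also have "\<dots> \<le> c / (1/2)"
    using small by (intro divide_left_mono) (auto simp: c_def)
  finally show ?thesis by (simp add: c_def)
qed

lemma wiener_maximal_inequality:
  assumes "prob_space M" and W: "wiener_from M F s W" and sub: "\<And>t. subalgebra M (F t)"
    and F_mono: "\<And>u t. u \<le> t \<Longrightarrow> sets (F u) \<subseteq> sets (F t)"
    and H: "0 < H" and a: "0 < a" and small: "3 * H^2 / a^4 \<le> 1/2"
  obtains Z where "Z \<in> sets M" "measure M Z \<le> 6 * H^2 / a^4"
    "AE \<omega> in M. \<omega> \<notin> Z \<longrightarrow> (\<forall>r\<in>{s..s+H}. \<bar>W r \<omega>\<bar> \<le> 2*a)"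
proof -
  interpret prob_space M by fact
  define \<tau> where "\<tau> = (\<lambda>m k. s + H * real k / 2^m)"
  define Z where "Z = (\<lambda>m. {\<omega>\<in>space M. \<exists>k\<le>2^m. 2*a < \<bar>W (\<tau> m k) \<omega>\<bar>})"
  have \<tau>_s: "s \<le> \<tau> m k" for m k using H by (simp add: \<tau>_def)
  have Z_M: "Z m \<in> events" for m
  proof -
    have [measurable]: "W (\<tau> m k) \<in> borel_measurable M" for k
      using measurable_from_subalg[OF sub wiener_fromD(1)[OF W \<tau>_s]] .
    show ?thesis unfolding Z_def by measurable
  qed
  have Z_prob: "prob (Z m) \<le> 6 * H^2 / a^4" for m
    unfolding Z_def
  proof (rule wiener_grid_maximal[OF \<open>prob_space M\<close> W sub F_mono _ _ _ a small])
    show "\<tau> m j \<le> \<tau> m k" if "j \<le> k" for j k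
      using that H by (simp add: \<tau>_def divide_right_mono mult_left_mono)
  qed (auto simp: \<tau>_def)
  have "incseq Z"
  proof (rule incseq_SucI)
    fix m
    have refine: "\<tau> (Suc m) (2*k) = \<tau> m k" for k by (simp add: \<tau>_def)
    show "Z m \<subseteq> Z (Suc m)"
    proof
      fix \<omega> assume "\<omega> \<in> Z m"
      then obtain k where "k \<le> 2^m" "2*a < \<bar>W (\<tau> m k) \<omega>\<bar>" "\<omega> \<in> space M"
        by (auto simp: Z_def)
      then show "\<omega> \<in> Z (Suc m)"
        unfolding Z_def using refine[of k] by (intro CollectI conjI exI[of _ "2*k"]) auto
    qed
  qed
  then have "(\<lambda>m. prob (Z m)) \<longlonglongrightarrow> prob (\<Union>m. Z m)"
    using Z_M by (intro finite_Lim_measure_incseq) auto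
  then have "prob (\<Union>m. Z m) \<le> 6 * H^2 / a^4"
    using Z_prob by (intro Lim_bounded[where M=0]) auto
  moreover have "AE \<omega> in M. \<omega> \<notin> (\<Union>m. Z m) \<longrightarrow> (\<forall>r\<in>{s..s+H}. \<bar>W r \<omega>\<bar> \<le> 2*a)"
    using wiener_fromD(3)[OF W] AE_space
  proof eventually_elim
    case (elim \<omega>)
    show ?case
    proof (intro impI ballI)
      fix r assume "\<omega> \<notin> (\<Union>m. Z m)" "r \<in> {s..s+H}"
      moreover have "continuous_on {s..s+H} (\<lambda>t. W t \<omega>)"
        using elim(1) by (rule continuous_on_subset) auto
      ultimately show "\<bar>W r \<omega>\<bar> \<le> 2*a"
        using continuous_bound_from_dyadics[OF _ H] elim by (force simp: Z_def \<tau>_def)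
    qed
  qed
  ultimately show ?thesis using that Z_M by blast
qed

section \<open>Exceptional events\<close>

lemma (in prob_space) events_exceeds_on_rationals:
  fixes Z :: "real \<Rightarrow> 'a \<Rightarrow> real"
  assumes "\<And>t. t \<in> S \<Longrightarrow> Z t \<in> borel_measurable M"
  shows "{\<omega>\<in>space M. \<exists>q\<in>\<rat> \<inter> S. c < \<bar>Z q \<omega>\<bar>} \<in> events"
proof -
  have "{\<omega>\<in>space M. \<exists>q\<in>\<rat> \<inter> S. c < \<bar>Z q \<omega>\<bar>} = (\<Union>q\<in>\<rat> \<inter> S. {\<omega>\<in>space M. c < \<bar>Z q \<omega>\<bar>})"
    by auto
  also have "\<dots> \<in> events"
    using countable_rat assms by (intro sets.countable_UN'') auto
  finally show ?thesis .
qed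

lemma (in prob_space) prob_exceeds_on_rationals_tendsto_0:
  fixes Z :: "real \<Rightarrow> 'a \<Rightarrow> real"
  assumes S: "compact S" and meas: "\<And>t. t \<in> S \<Longrightarrow> Z t \<in> borel_measurable M"
    and cont: "AE \<omega> in M. continuous_on S (\<lambda>t. Z t \<omega>)"
  shows "(\<lambda>m. prob {\<omega>\<in>space M. \<exists>q\<in>\<rat> \<inter> S. real m < \<bar>Z q \<omega>\<bar>}) \<longlonglongrightarrow> 0"
proof -
  define Y where "Y = (\<lambda>m::nat. {\<omega>\<in>space M. \<exists>q\<in>\<rat> \<inter> S. real m < \<bar>Z q \<omega>\<bar>})"
  have Y_M: "Y m \<in> events" for m
    unfolding Y_def by (rule events_exceeds_on_rationals[OF meas])
  have "Y n \<subseteq> Y m" if "m \<le> n" for m n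
  proof
    fix \<omega> assume "\<omega> \<in> Y n"
    then obtain q where "\<omega> \<in> space M" "q \<in> \<rat> \<inter> S" "real n < \<bar>Z q \<omega>\<bar>" by (auto simp: Y_def)
    moreover have "real m \<le> real n" using that by simp
    ultimately show "\<omega> \<in> Y m" unfolding Y_def by (blast intro: le_less_trans)
  qed
  then have "decseq Y" unfolding decseq_def by blast
  then have "(\<lambda>m. prob (Y m)) \<longlonglongrightarrow> prob (\<Inter>m. Y m)"
    using Y_M by (intro finite_Lim_measure_decseq) auto
  moreover have "AE \<omega> in M. \<omega> \<notin> (\<Inter>m. Y m)"
    using cont
  proof eventually_elim
    case (elim \<omega>)
    obtain B where "\<And>t. t \<in> S \<Longrightarrow> \<bar>Z t \<omega>\<bar> \<le> B"
      using continuous_on_compact_bound[OF S elim] by (metis real_norm_def)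
    moreover obtain m :: nat where "B < real m" using reals_Archimedean2 by blast
    ultimately have "\<omega> \<notin> Y m" by (force simp: Y_def)
    then show ?case by blast
  qed
  then have "prob (\<Inter>m. Y m) = 0"
    using Y_M by (intro measure_eq_0_null_sets) (auto simp: AE_iff_null_sets)
  ultimately show ?thesis unfolding Y_def by simp
qed

lemma (in prob_space) AE_of_small_exceptional_sets:
  assumes small: "\<And>\<eta>. 0 < \<eta> \<Longrightarrow> \<exists>Z\<in>events. prob Z \<le> \<eta> \<and> (AE \<omega> in M. \<omega> \<notin> Z \<longrightarrow> P \<omega>)"
  shows "AE \<omega> in M. P \<omega>"
proof -
  have "\<exists>Z\<in>events. prob Z \<le> inverse (real (Suc n)) \<and> (AE \<omega> in M. \<omega> \<notin> Z \<longrightarrow> P \<omega>)" for n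
    by (rule small) simp
  then have "\<forall>n. \<exists>Z. Z \<in> events \<and> prob Z \<le> inverse (real (Suc n)) \<and> (AE \<omega> in M. \<omega> \<notin> Z \<longrightarrow> P \<omega>)"
    by blast
  from choice[OF this] obtain Z where Z: "\<And>n. Z n \<in> events" "\<And>n. prob (Z n) \<le> inverse (real (Suc n))"
    "\<And>n. AE \<omega> in M. \<omega> \<notin> Z n \<longrightarrow> P \<omega>"
    by blast
  have Z_inf: "(\<Inter>n. Z n) \<in> events" using Z(1) by auto
  have "prob (\<Inter>n. Z n) \<le> prob (Z n)" for n using Z(1) Z_inf by (intro finite_measure_mono) auto
  then have "prob (\<Inter>n. Z n) \<le> inverse (real (Suc n))" for n using Z(2) order.trans by blast
  then have "prob (\<Inter>n. Z n) \<le> 0"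
    by (intro tendsto_le[OF trivial_limit_sequentially LIMSEQ_inverse_real_of_nat tendsto_const]
        always_eventually allI)
  then have "prob (\<Inter>n. Z n) = 0" using measure_nonneg by (rule antisym)
  then have "(\<Inter>n. Z n) \<in> null_sets M" using Z_inf by (simp add: null_sets_def emeasure_eq_measure)
  then have "AE \<omega> in M. \<omega> \<notin> (\<Inter>n. Z n)" by (rule AE_not_in)
  moreover have "AE \<omega> in M. \<forall>n. \<omega> \<notin> Z n \<longrightarrow> P \<omega>" using Z(3) by (subst AE_all_countable) blast
  ultimately show ?thesis by eventually_elim blast
qed

section \<open>Moduli of continuity in time\<close>

definition has_time_modulus :: "real \<Rightarrow> (real \<Rightarrow> real \<Rightarrow> real) \<Rightarrow> real \<Rightarrow> real \<Rightarrow> bool" where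
  "has_time_modulus T Y N \<epsilon> \<longleftrightarrow> (\<exists>h>0. \<forall>s\<in>{0..T}. \<forall>t\<in>{0..T}. \<bar>t - s\<bar> \<le> h \<longrightarrow>
     (\<forall>x. \<bar>x\<bar> \<le> N \<longrightarrow> \<bar>Y t x - Y s x\<bar> \<le> \<epsilon>))"

lemma has_time_modulus_mono:
  assumes "has_time_modulus T Y N' \<epsilon>'" "N \<le> N'" "\<epsilon>' \<le> \<epsilon>"
  shows "has_time_modulus T Y N \<epsilon>"
  using assms unfolding has_time_modulus_def by (meson order.trans)

lemma mono_close_to_id_between_grid_points:
  fixes f :: "real \<Rightarrow> real"
  assumes f: "mono f" and \<delta>: "0 < \<delta>"
    and grid: "\<And>i. i \<le> L + 1 \<Longrightarrow> \<bar>f (y0 + real i * \<delta>) - (y0 + real i * \<delta>)\<bar> \<le> e"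
    and z: "y0 \<le> z" "z \<le> y0 + real L * \<delta>"
  shows "\<bar>f z - z\<bar> \<le> e + \<delta>"
proof -
  define i where "i = nat \<lfloor>(z - y0) / \<delta>\<rfloor>"
  have "real i = of_int \<lfloor>(z - y0) / \<delta>\<rfloor>" using z \<delta> by (simp add: i_def)
  then have i: "real i \<le> (z - y0) / \<delta>" "(z - y0) / \<delta> < real i + 1" by linarith+
  then have below: "y0 + real i * \<delta> \<le> z" and above: "z \<le> y0 + real (i + 1) * \<delta>"
    using \<delta> by (simp_all add: field_simps)
  have "(z - y0) / \<delta> \<le> real L" using z \<delta> by (simp add: field_simps)
  then have "i \<le> L" using i(1) by linarith
  then have "f (y0 + real i * \<delta>) \<ge> y0 + real i * \<delta> - e"
    and "f (y0 + real (i + 1) * \<delta>) \<le> y0 + real (i + 1) * \<delta> + e"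
    using grid[of i] grid[of "i + 1"] by (simp_all add: abs_le_iff)
  moreover have "f (y0 + real i * \<delta>) \<le> f z" "f z \<le> f (y0 + real (i + 1) * \<delta>)"
    using monoD[OF f below] monoD[OF f above] .
  ultimately show ?thesis using below above by (simp add: abs_le_iff algebra_simps)
qed

lemma Rats_near_in_interval:
  fixes t T \<rho> :: real
  assumes "t \<in> {0..T}" "0 < T" "0 < \<rho>"
  obtains q where "q \<in> \<rat>" "q \<in> {0..T}" "\<bar>q - t\<bar> < \<rho>"
proof (cases "t < T")
  case True
  obtain q where "q \<in> \<rat>" "t < q" "q < min T (t + \<rho>)"
    using Rats_dense_in_real[of t "min T (t + \<rho>)"] True assms by auto
  then show ?thesis using that assms by auto
next
  case False
  obtain q where "q \<in> \<rat>" "max 0 (T - \<rho>) < q" "q < T"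
    using Rats_dense_in_real[of "max 0 (T - \<rho>)" T] assms by auto
  then show ?thesis using that assms False by auto
qed

lemma Rats_right_of_two_right_continuous:
  fixes f g :: "real \<Rightarrow> real"
  assumes "continuous (at_right x) f" "continuous (at_right x) g" "0 < \<gamma>"
  obtains d where "d \<in> \<rat>" "x < d" "d < x + 1" "\<bar>f d - f x\<bar> < \<gamma>" "\<bar>g d - g x\<bar> < \<gamma>"
proof -
  have "(f \<longlongrightarrow> f x) (at_right x)" "(g \<longlongrightarrow> g x) (at_right x)"
    using assms by (simp_all add: continuous_within)
  then have "\<forall>\<^sub>F d in at_right x. dist (f d) (f x) < \<gamma>" "\<forall>\<^sub>F d in at_right x. dist (g d) (g x) < \<gamma>"
    using assms(3) by (auto intro: tendstoD)
  moreover have "\<forall>\<^sub>F d in at_right x. d < x + 1"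
    unfolding eventually_at_right_field by (intro exI[of _ "x + 1"]) auto
  ultimately have "\<forall>\<^sub>F d in at_right x. d < x + 1 \<and> \<bar>f d - f x\<bar> < \<gamma> \<and> \<bar>g d - g x\<bar> < \<gamma>"
    by eventually_elim (auto simp: dist_real_def)
  then obtain b where b: "x < b"
    "\<And>d. x < d \<Longrightarrow> d < b \<Longrightarrow> d < x + 1 \<and> \<bar>f d - f x\<bar> < \<gamma> \<and> \<bar>g d - g x\<bar> < \<gamma>"
    unfolding eventually_at_right_field by blast
  obtain d where "d \<in> \<rat>" "x < d" "d < b" using Rats_dense_in_real[OF b(1)] by blast
  then show ?thesis using that b(2)[of d] by blast
qed

lemma has_time_modulus_from_rationals:
  fixes Y :: "real \<Rightarrow> real \<Rightarrow> real"
  assumes T: "0 < T" and h: "0 < h" and \<epsilon>: "0 < \<epsilon>"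
    and right_cont: "\<And>t x. t \<in> {0..T} \<Longrightarrow> continuous (at_right x) (Y t)"
    and cont: "\<And>d. d \<in> \<rat> \<Longrightarrow> continuous_on {0..T} (\<lambda>t. Y t d)"
    and rational: "\<And>q1 q2 d. q1 \<in> \<rat> \<Longrightarrow> q2 \<in> \<rat> \<Longrightarrow> q1 \<in> {0..T} \<Longrightarrow> q2 \<in> {0..T} \<Longrightarrow>
        \<bar>q2 - q1\<bar> \<le> h \<Longrightarrow> d \<in> \<rat> \<Longrightarrow> \<bar>d\<bar> \<le> N + 1 \<Longrightarrow> \<bar>Y q2 d - Y q1 d\<bar> \<le> \<epsilon>"
  shows "has_time_modulus T Y N (2 * \<epsilon>)"
  unfolding has_time_modulus_def
proof (intro exI[of _ "h/2"] conjI ballI impI allI)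
  fix s t x assume s: "s \<in> {0..T}" and t: "t \<in> {0..T}" and st: "\<bar>t - s\<bar> \<le> h/2" and x: "\<bar>x\<bar> \<le> N"
  define \<gamma> where "\<gamma> = \<epsilon> / 4"
  have \<gamma>: "0 < \<gamma>" using \<epsilon> by (simp add: \<gamma>_def)
  obtain d where d: "d \<in> \<rat>" "x < d" "d < x + 1" "\<bar>Y t d - Y t x\<bar> < \<gamma>" "\<bar>Y s d - Y s x\<bar> < \<gamma>"
    using Rats_right_of_two_right_continuous[OF right_cont[OF t] right_cont[OF s] \<gamma>] by blast
  have near: "\<exists>q\<in>\<rat>. q \<in> {0..T} \<and> \<bar>q - r\<bar> \<le> h/4 \<and> \<bar>Y q d - Y r d\<bar> < \<gamma>" if r: "r \<in> {0..T}" for r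
  proof -
    obtain \<rho> where \<rho>: "\<rho> > 0" "\<And>r'. r' \<in> {0..T} \<Longrightarrow> \<bar>r' - r\<bar> < \<rho> \<Longrightarrow> \<bar>Y r' d - Y r d\<bar> < \<gamma>"
      using cont[OF d(1)] r \<gamma> unfolding continuous_on_iff dist_real_def by metis
    obtain q where "q \<in> \<rat>" "q \<in> {0..T}" "\<bar>q - r\<bar> < min \<rho> (h/4)"
      using Rats_near_in_interval[OF r T, of "min \<rho> (h/4)"] \<rho>(1) h by auto
    then show ?thesis using \<rho>(2)[of q] by auto
  qed
  obtain qt where qt: "qt \<in> \<rat>" "qt \<in> {0..T}" "\<bar>qt - t\<bar> \<le> h/4" "\<bar>Y qt d - Y t d\<bar> < \<gamma>"
    using near[OF t] by blast
  obtain qs where qs: "qs \<in> \<rat>" "qs \<in> {0..T}" "\<bar>qs - s\<bar> \<le> h/4" "\<bar>Y qs d - Y s d\<bar> < \<gamma>"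
    using near[OF s] by blast
  have "\<bar>qt - qs\<bar> \<le> h" using qt(3) qs(3) st by arith
  moreover have "\<bar>d\<bar> \<le> N + 1" using d(2,3) x by arith
  ultimately have "\<bar>Y qt d - Y qs d\<bar> \<le> \<epsilon>" using rational[OF qs(1) qt(1) qs(2) qt(2) _ d(1)] by simp
  then show "\<bar>Y t x - Y s x\<bar> \<le> 2 * \<epsilon>"
    using qt(4) qs(4) d(4,5) unfolding \<gamma>_def by linarith
qed (use h in simp)

text \<open>The step from a grid time \<open>p = k h\<close> to a later time \<open>q \<le> p + 2h\<close> goes through the
  cocycle property: \<open>\<Phi> 0 q d = \<Phi> p q z\<close> with \<open>z = \<Phi> 0 p d\<close> in \<open>[-m, m]\<close>, and \<open>\<Phi> p q\<close> is a
  monotone map which is \<open>e\<close>-close to the identity on the space grid of mesh \<open>e\<close>.\<close>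
lemma rational_modulus_from_grid:
  fixes \<Phi> :: "real \<Rightarrow> real \<Rightarrow> real \<Rightarrow> real"
  assumes mono: "\<And>u v. 0 \<le> u \<Longrightarrow> u \<le> v \<Longrightarrow> mono (\<Phi> u v)"
    and cocycle: "\<And>p q. p \<in> \<rat> \<Longrightarrow> q \<in> \<rat> \<Longrightarrow> 0 \<le> p \<Longrightarrow> p \<le> q \<Longrightarrow> \<Phi> 0 q = \<Phi> p q \<circ> \<Phi> 0 p"
    and h: "0 < h" "h \<in> \<rat>" and e: "0 < e" and K: "T < real (Suc K) * h"
    and range: "\<And>k. k \<le> K \<Longrightarrow> \<bar>\<Phi> 0 (real k * h) (N + 1)\<bar> \<le> m \<and> \<bar>\<Phi> 0 (real k * h) (- (N + 1))\<bar> \<le> m"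
    and L: "2 * m \<le> real L * e"
    and grid: "\<And>k i r. k \<le> K \<Longrightarrow> i \<le> L + 1 \<Longrightarrow> r \<in> {real k * h..real k * h + 2 * h} \<Longrightarrow>
        \<bar>\<Phi> (real k * h) r (- m + real i * e) - (- m + real i * e)\<bar> \<le> e"
    and q: "q1 \<in> \<rat>" "q2 \<in> \<rat>" "q1 \<in> {0..T}" "q2 \<in> {0..T}" "\<bar>q2 - q1\<bar> \<le> h"
    and d: "\<bar>d\<bar> \<le> N + 1"
  shows "\<bar>\<Phi> 0 q2 d - \<Phi> 0 q1 d\<bar> \<le> 4 * e"
proof -
  have step: "\<bar>\<Phi> 0 q d - \<Phi> 0 (real k * h) d\<bar> \<le> 2 * e"
    if k: "k \<le> K" and q: "q \<in> \<rat>" "real k * h \<le> q" "q \<le> real k * h + 2 * h" for k q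
  proof -
    let ?p = "real k * h"
    have p: "?p \<in> \<rat>" "0 \<le> ?p" using h by auto
    define z where "z = \<Phi> 0 ?p d"
    have "\<Phi> 0 ?p (- (N + 1)) \<le> z" "z \<le> \<Phi> 0 ?p (N + 1)"
      using monoD[OF mono[OF order.refl p(2)]] d unfolding z_def by auto
    then have "- m \<le> z" "z \<le> - m + real L * e" using range[OF k] L by (auto simp: abs_le_iff)
    then have "\<bar>\<Phi> ?p q z - z\<bar> \<le> e + e"
      using grid[OF k _, of _ q] q
      by (intro mono_close_to_id_between_grid_points[OF mono[OF p(2) q(2)] e]) auto
    moreover have "\<Phi> 0 q d = \<Phi> ?p q z" using cocycle[OF p(1) q(1) p(2) q(2)] by (simp add: z_def)
    ultimately show ?thesis by (simp add: z_def)
  qed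
  have ordered: "\<bar>\<Phi> 0 q' d - \<Phi> 0 q d\<bar> \<le> 4 * e"
    if "q \<in> \<rat>" "q' \<in> \<rat>" "q \<in> {0..T}" "q \<le> q'" "q' - q \<le> h" for q q'
  proof -
    define k where "k = nat \<lfloor>q / h\<rfloor>"
    have "real k = of_int \<lfloor>q / h\<rfloor>" using that h by (simp add: k_def)
    then have "real k \<le> q / h" "q / h < real k + 1" by linarith+
    then have kq: "real k * h \<le> q" "q < real k * h + h" using h by (simp_all add: field_simps)
    have "q / h < real (Suc K)" using that(3) K h by (simp add: field_simps)
    then have "k \<le> K" using \<open>real k \<le> q / h\<close> by linarith
    then show ?thesis
      using step[of k q] step[of k q'] that kq by (simp add: abs_le_iff)
  qed
  show ?thesis
  proof (cases "q1 \<le> q2")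
    case True
    then show ?thesis using ordered[of q1 q2] q by simp
  next
    case False
    then show ?thesis using ordered[of q2 q1] q by (simp add: abs_minus_commute)
  qed
qed

lemma Rats_witness_at_right_0:
  assumes "\<forall>\<^sub>F h in at_right (0::real). P h"
  obtains h where "h \<in> \<rat>" "0 < h" "P h"
proof -
  obtain b where "0 < b" "\<And>h. 0 < h \<Longrightarrow> h < b \<Longrightarrow> P h"
    using assms unfolding eventually_at_right_field by auto
  moreover obtain h where "h \<in> \<rat>" "0 < h" "h < b" using Rats_dense_in_real[OF \<open>0 < b\<close>] by blast
  ultimately show ?thesis using that by blast
qed

section \<open>Harris flows\<close>

definition flow_noise ::
  "(real \<Rightarrow> real \<Rightarrow> 'a \<Rightarrow> real \<Rightarrow> real) \<Rightarrow> (real \<Rightarrow> real) \<Rightarrow> real \<Rightarrow> real \<Rightarrow> real \<Rightarrow> 'a \<Rightarrow> real" where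
  "flow_noise X a s x t \<omega> = X s t \<omega> x - x - (LBINT r=s..t. a (X s r \<omega> x))"

lemma harris_flowD:
  assumes "harris_flow M \<phi> a X"
  shows "prob_space M"
    and "\<And>s t y. 0 \<le> s \<Longrightarrow> s \<le> t \<Longrightarrow> (\<lambda>\<omega>. X s t \<omega> y) \<in> borel_measurable M"
    and "\<And>s t \<omega>. 0 \<le> s \<Longrightarrow> s \<le> t \<Longrightarrow> \<omega> \<in> space M \<Longrightarrow> mono (X s t \<omega>)"
    and "\<And>s t \<omega> x. 0 \<le> s \<Longrightarrow> s \<le> t \<Longrightarrow> \<omega> \<in> space M \<Longrightarrow> continuous (at_right x) (X s t \<omega>)"
    and "\<And>s t r. 0 \<le> s \<Longrightarrow> s \<le> t \<Longrightarrow> t \<le> r \<Longrightarrow> AE \<omega> in M. X s r \<omega> = X t r \<omega> \<circ> X s t \<omega>"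
    and "\<And>s x. 0 \<le> s \<Longrightarrow> wiener_from M (flow_filtration M X s) s (flow_noise X a s x)"
proof -
  note H = assms[unfolded harris_flow_def]
  show "prob_space M" using H by (rule conjunct1)
  have regular: "\<forall>s t. 0 \<le> s \<and> s \<le> t \<longrightarrow> (\<forall>\<omega>\<in>space M. cadlag_nondecr (X s t \<omega>)) \<and>
      (\<forall>y. (\<lambda>\<omega>. X s t \<omega> y) \<in> borel_measurable M)"
    using H by (elim conjE)
  then show "\<And>s t y. 0 \<le> s \<Longrightarrow> s \<le> t \<Longrightarrow> (\<lambda>\<omega>. X s t \<omega> y) \<in> borel_measurable M"
    and "\<And>s t \<omega>. 0 \<le> s \<Longrightarrow> s \<le> t \<Longrightarrow> \<omega> \<in> space M \<Longrightarrow> mono (X s t \<omega>)"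
    and "\<And>s t \<omega> x. 0 \<le> s \<Longrightarrow> s \<le> t \<Longrightarrow> \<omega> \<in> space M \<Longrightarrow> continuous (at_right x) (X s t \<omega>)"
    by (simp_all add: cadlag_nondecr_def)
  show "\<And>s t r. 0 \<le> s \<Longrightarrow> s \<le> t \<Longrightarrow> t \<le> r \<Longrightarrow> AE \<omega> in M. X s r \<omega> = X t r \<omega> \<circ> X s t \<omega>"
    using H by (elim conjE) simp
  show "\<And>s x. 0 \<le> s \<Longrightarrow> wiener_from M (flow_filtration M X s) s (flow_noise X a s x)"
    using H by (elim conjE) (simp add: flow_noise_def[abs_def])
qed

lemma flow_filtration_subalgebra:
  assumes X: "\<And>u v y. 0 \<le> u \<Longrightarrow> u \<le> v \<Longrightarrow> (\<lambda>\<omega>. X u v \<omega> y) \<in> borel_measurable M" and s: "0 \<le> s"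
  shows "subalgebra M (flow_filtration M X s t)"
proof -
  let ?G = "{(\<lambda>\<omega>. X u v \<omega> y) -` B \<inter> space M | u v y B. s \<le> u \<and> u \<le> v \<and> v \<le> t \<and> B \<in> sets borel}"
  have "?G \<subseteq> sets M"
  proof
    fix A assume "A \<in> ?G"
    then obtain u v y B where A: "A = (\<lambda>\<omega>. X u v \<omega> y) -` B \<inter> space M" "s \<le> u" "u \<le> v" "B \<in> sets borel"
      by blast
    then show "A \<in> sets M" using X[of u v y] s by (simp add: measurable_sets)
  qed
  moreover have "?G \<subseteq> Pow (space M)" by auto
  ultimately show ?thesis
    unfolding flow_filtration_def subalgebra_def by (simp add: sets.sigma_sets_subset)
qed

lemma flow_filtration_mono:
  assumes "t \<le> t'"
  shows "sets (flow_filtration M X s t) \<subseteq> sets (flow_filtration M X s t')"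
proof -
  let ?G = "\<lambda>t. {(\<lambda>\<omega>. X u v \<omega> y) -` B \<inter> space M | u v y B. s \<le> u \<and> u \<le> v \<and> v \<le> t \<and> B \<in> sets borel}"
  have "?G t \<subseteq> ?G t'" using assms by force
  moreover have "?G t' \<subseteq> Pow (space M)" by auto
  ultimately show ?thesis unfolding flow_filtration_def by (simp add: sigma_sets_mono')
qed

lemma drift_equation_flow_path:
  assumes "a \<in> borel_measurable borel" "\<And>z. \<bar>a z\<bar> \<le> C * (1 + \<bar>z\<bar>)"
    and "continuous_on {s..} (\<lambda>t. flow_noise X a s x t \<omega>)"
  shows "drift_equation a (\<lambda>t. flow_noise X a s x t \<omega>) (\<lambda>t. X s t \<omega> x) s x C"
  using assms by unfold_locales (simp_all add: flow_noise_def)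

lemma harris_flow_AE_continuous_path:
  assumes HF: "harris_flow M \<phi> a X" and a: "a \<in> borel_measurable borel"
    and growth: "\<And>z. \<bar>a z\<bar> \<le> C * (1 + \<bar>z\<bar>)" and s: "0 \<le> s"
  shows "AE \<omega> in M. continuous_on {s..t} (\<lambda>r. X s r \<omega> x)"
  using wiener_fromD(3)[OF harris_flowD(6)[OF HF s]]
  by eventually_elim (rule drift_equation.continuous[OF drift_equation_flow_path[OF a growth]])

lemma harris_flow_local_displacement:
  assumes HF: "harris_flow M \<phi> a X" and a: "a \<in> borel_measurable borel"
    and growth: "\<And>z. \<bar>a z\<bar> \<le> C * (1 + \<bar>z\<bar>)"
    and p: "0 \<le> p" and y: "\<bar>y\<bar> \<le> Mb" and H: "0 < H" "C * H \<le> 1/2"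
    and \<alpha>: "0 < \<alpha>" "3 * H^2 / \<alpha>^4 \<le> 1/2"
  obtains Z where "Z \<in> sets M" "measure M Z \<le> 6 * H^2 / \<alpha>^4"
    "AE \<omega> in M. \<omega> \<notin> Z \<longrightarrow> (\<forall>r\<in>{p..p+H}. \<bar>X p r \<omega> y - y\<bar> \<le> 2*\<alpha> + 2*H*(C*(1 + Mb + 2*\<alpha>)))"
proof -
  note W = harris_flowD(6)[OF HF p, of y]
  obtain Z where Z: "Z \<in> sets M" "measure M Z \<le> 6 * H^2 / \<alpha>^4"
    and small_noise: "AE \<omega> in M. \<omega> \<notin> Z \<longrightarrow> (\<forall>r\<in>{p..p+H}. \<bar>flow_noise X a p y r \<omega>\<bar> \<le> 2*\<alpha>)"
    using wiener_maximal_inequality[OF harris_flowD(1)[OF HF] W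
        flow_filtration_subalgebra[OF harris_flowD(2)[OF HF] p] flow_filtration_mono H(1) \<alpha>] .
  have "AE \<omega> in M. \<omega> \<notin> Z \<longrightarrow> (\<forall>r\<in>{p..p+H}. \<bar>X p r \<omega> y - y\<bar> \<le> 2*\<alpha> + 2*H*(C*(1 + Mb + 2*\<alpha>)))"
    using small_noise wiener_fromD(3)[OF W]
  proof eventually_elim
    case (elim \<omega>)
    then show ?case
      using drift_equation.local_bound[OF drift_equation_flow_path[OF a growth elim(2)]] H y by auto
  qed
  with Z that show ?thesis by blast
qed

lemma harris_flow_local_displacement_finite:
  assumes HF: "harris_flow M \<phi> a X" and a: "a \<in> borel_measurable borel"
    and growth: "\<And>z. \<bar>a z\<bar> \<le> C * (1 + \<bar>z\<bar>)"
    and P: "finite P" "\<And>p y. (p, y) \<in> P \<Longrightarrow> 0 \<le> p \<and> \<bar>y\<bar> \<le> Mb"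
    and H: "0 < H" "C * H \<le> 1/2" and \<alpha>: "0 < \<alpha>" "3 * H^2 / \<alpha>^4 \<le> 1/2"
  obtains Z where "Z \<in> sets M" "measure M Z \<le> card P * (6 * H^2 / \<alpha>^4)"
    "AE \<omega> in M. \<omega> \<notin> Z \<longrightarrow>
      (\<forall>(p, y)\<in>P. \<forall>r\<in>{p..p+H}. \<bar>X p r \<omega> y - y\<bar> \<le> 2*\<alpha> + 2*H*(C*(1 + Mb + 2*\<alpha>)))"
proof -
  interpret prob_space M using harris_flowD(1)[OF HF] .
  let ?good = "\<lambda>p y \<omega>. \<forall>r\<in>{p..p+H}. \<bar>X p r \<omega> y - y\<bar> \<le> 2*\<alpha> + 2*H*(C*(1 + Mb + 2*\<alpha>))"
  have "\<forall>q\<in>P. \<exists>Z. Z \<in> events \<and> prob Z \<le> 6 * H^2 / \<alpha>^4 \<and>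
      (AE \<omega> in M. \<omega> \<notin> Z \<longrightarrow> ?good (fst q) (snd q) \<omega>)"
  proof
    fix q assume "q \<in> P"
    then have "0 \<le> fst q" "\<bar>snd q\<bar> \<le> Mb" using P(2)[of "fst q" "snd q"] by auto
    from harris_flow_local_displacement[OF HF a growth this H \<alpha>] show "\<exists>Z. Z \<in> events \<and>
        prob Z \<le> 6 * H^2 / \<alpha>^4 \<and> (AE \<omega> in M. \<omega> \<notin> Z \<longrightarrow> ?good (fst q) (snd q) \<omega>)"
      by blast
  qed
  from bchoice[OF this] obtain Zq where Zq_all: "\<forall>q\<in>P. Zq q \<in> events \<and> prob (Zq q) \<le> 6 * H^2 / \<alpha>^4 \<and>
      (AE \<omega> in M. \<omega> \<notin> Zq q \<longrightarrow> ?good (fst q) (snd q) \<omega>)"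
    by blast
  then have Zq: "\<And>q. q \<in> P \<Longrightarrow> Zq q \<in> events" "\<And>q. q \<in> P \<Longrightarrow> prob (Zq q) \<le> 6 * H^2 / \<alpha>^4"
    "\<And>q. q \<in> P \<Longrightarrow> AE \<omega> in M. \<omega> \<notin> Zq q \<longrightarrow> ?good (fst q) (snd q) \<omega>"
    by auto
  have "prob (\<Union>q\<in>P. Zq q) \<le> (\<Sum>q\<in>P. prob (Zq q))"
    using P(1) Zq(1) by (intro finite_measure_subadditive_finite) auto
  also have "\<dots> \<le> card P * (6 * H^2 / \<alpha>^4)"
    by (intro sum_bounded_above Zq(2))
  finally have "prob (\<Union>q\<in>P. Zq q) \<le> card P * (6 * H^2 / \<alpha>^4)" .
  moreover have "AE \<omega> in M. \<forall>q\<in>P. \<omega> \<notin> Zq q \<longrightarrow> ?good (fst q) (snd q) \<omega>"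
    by (rule AE_finite_allI[OF P(1)]) (rule Zq(3))
  then have "AE \<omega> in M. \<omega> \<notin> (\<Union>q\<in>P. Zq q) \<longrightarrow> (\<forall>(p, y)\<in>P. ?good p y \<omega>)"
    by eventually_elim auto
  ultimately show ?thesis using that P(1) Zq(1) by blast
qed

lemma harris_flow_AE_rational_regularity:
  assumes HF: "harris_flow M \<phi> a X" and a: "a \<in> borel_measurable borel"
    and growth: "\<And>z. \<bar>a z\<bar> \<le> C * (1 + \<bar>z\<bar>)"
  shows "AE \<omega> in M. (\<forall>p\<in>\<rat>. \<forall>q\<in>\<rat>. 0 \<le> p \<longrightarrow> p \<le> q \<longrightarrow> X 0 q \<omega> = X p q \<omega> \<circ> X 0 p \<omega>) \<and>
    (\<forall>d\<in>\<rat>. continuous_on {0..T} (\<lambda>t. X 0 t \<omega> d))"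
proof -
  interpret prob_space M using harris_flowD(1)[OF HF] .
  have "AE \<omega> in M. \<forall>p\<in>\<rat>. \<forall>q\<in>\<rat>. 0 \<le> p \<longrightarrow> p \<le> q \<longrightarrow> X 0 q \<omega> = X p q \<omega> \<circ> X 0 p \<omega>"
    using harris_flowD(5)[OF HF, of 0] by (simp add: AE_ball_countable countable_rat)
  moreover have "AE \<omega> in M. \<forall>d\<in>\<rat>. continuous_on {0..T} (\<lambda>t. X 0 t \<omega> d)"
    using harris_flow_AE_continuous_path[OF HF a growth order.refl]
    by (simp add: AE_ball_countable countable_rat)
  ultimately show ?thesis by eventually_elim blast
qed

lemma harris_flow_grid_exceptional_set:
  assumes HF: "harris_flow M \<phi> a X" and a: "a \<in> borel_measurable borel"
    and growth: "\<And>z. \<bar>a z\<bar> \<le> C * (1 + \<bar>z\<bar>)"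
    and h: "0 < h" "C * (2*h) \<le> 1/2" and \<alpha>: "0 < \<alpha>" "3 * (2*h)^2 / \<alpha>^4 \<le> 1/2"
    and y: "\<And>i. i \<le> L + 1 \<Longrightarrow> \<bar>y0 + real i * e\<bar> \<le> Mb"
  obtains Z where "Z \<in> sets M" "measure M Z \<le> (real K + 1) * (real L + 2) * (6 * (2*h)^2 / \<alpha>^4)"
    "AE \<omega> in M. \<omega> \<notin> Z \<longrightarrow> (\<forall>k\<le>K. \<forall>i\<le>L + 1. \<forall>r\<in>{real k * h..real k * h + 2*h}.
      \<bar>X (real k * h) r \<omega> (y0 + real i * e) - (y0 + real i * e)\<bar> \<le> 2*\<alpha> + 2*(2*h)*(C*(1 + Mb + 2*\<alpha>)))"
proof -
  define G where "G = (\<lambda>(k, i). (real k * h, y0 + real i * e)) ` ({..K} \<times> {..L + 1})"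
  have G: "finite G" "\<And>p y. (p, y) \<in> G \<Longrightarrow> 0 \<le> p \<and> \<bar>y\<bar> \<le> Mb"
    using h y by (auto simp: G_def)
  obtain Z where Z: "Z \<in> sets M" "measure M Z \<le> card G * (6 * (2*h)^2 / \<alpha>^4)"
    "AE \<omega> in M. \<omega> \<notin> Z \<longrightarrow>
      (\<forall>(p, y)\<in>G. \<forall>r\<in>{p..p + 2*h}. \<bar>X p r \<omega> y - y\<bar> \<le> 2*\<alpha> + 2*(2*h)*(C*(1 + Mb + 2*\<alpha>)))"
    using harris_flow_local_displacement_finite[OF HF a growth G _ h(2) \<alpha>] h(1) by auto
  have "card G \<le> (K + 1) * (L + 2)"
    using card_image_le[of "{..K} \<times> {..L + 1}"] unfolding G_def by (simp add: card_cartesian_product)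
  then have "real (card G) \<le> real ((K + 1) * (L + 2))" by (simp only: of_nat_le_iff)
  then have "real (card G) \<le> (real K + 1) * (real L + 2)" by (simp add: algebra_simps)
  then have "card G * (6 * (2*h)^2 / \<alpha>^4) \<le> (real K + 1) * (real L + 2) * (6 * (2*h)^2 / \<alpha>^4)"
    by (rule mult_right_mono) simp
  then have "measure M Z \<le> (real K + 1) * (real L + 2) * (6 * (2*h)^2 / \<alpha>^4)"
    using Z(2) by linarith
  moreover have "AE \<omega> in M. \<omega> \<notin> Z \<longrightarrow> (\<forall>k\<le>K. \<forall>i\<le>L + 1. \<forall>r\<in>{real k * h..real k * h + 2*h}.
      \<bar>X (real k * h) r \<omega> (y0 + real i * e) - (y0 + real i * e)\<bar> \<le> 2*\<alpha> + 2*(2*h)*(C*(1 + Mb + 2*\<alpha>)))"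
    using Z(3)
  proof eventually_elim
    case (elim \<omega>)
    have "(real k * h, y0 + real i * e) \<in> G" if "k \<le> K" "i \<le> L + 1" for k i
      unfolding G_def using that by (intro image_eqI[where x="(k, i)"]) auto
    then show ?case using elim by fastforce
  qed
  ultimately show ?thesis using that Z(1) by blast
qed

lemma harris_flow_time_modulus_from_grid:
  assumes HF: "harris_flow M \<phi> a X" and \<omega>: "\<omega> \<in> space M"
    and regular: "(\<forall>p\<in>\<rat>. \<forall>q\<in>\<rat>. 0 \<le> p \<longrightarrow> p \<le> q \<longrightarrow> X 0 q \<omega> = X p q \<omega> \<circ> X 0 p \<omega>) \<and>
      (\<forall>d\<in>\<rat>. continuous_on {0..T} (\<lambda>t. X 0 t \<omega> d))"
    and T: "0 < T" and h: "0 < h" "h \<in> \<rat>" and e: "0 < e"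
    and K: "T < real (Suc K) * h" "real K * h \<le> T"
    and range: "\<forall>q\<in>\<rat> \<inter> {0..T}. \<bar>X 0 q \<omega> (N + 1)\<bar> \<le> m \<and> \<bar>X 0 q \<omega> (- (N + 1))\<bar> \<le> m"
    and L: "2 * m \<le> real L * e"
    and grid: "\<forall>k\<le>K. \<forall>i\<le>L + 1. \<forall>r\<in>{real k * h..real k * h + 2*h}.
      \<bar>X (real k * h) r \<omega> (- m + real i * e) - (- m + real i * e)\<bar> \<le> e"
  shows "has_time_modulus T (\<lambda>t. X 0 t \<omega>) N (8 * e)"
proof -
  have mono: "mono (X u v \<omega>)" if "0 \<le> u" "u \<le> v" for u v
    using harris_flowD(3)[OF HF that \<omega>] .
  have cocycle: "X 0 q \<omega> = X p q \<omega> \<circ> X 0 p \<omega>" if "p \<in> \<rat>" "q \<in> \<rat>" "0 \<le> p" "p \<le> q" for p q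
    using regular that by blast
  have grid_range: "\<bar>X 0 (real k * h) \<omega> (N + 1)\<bar> \<le> m \<and> \<bar>X 0 (real k * h) \<omega> (- (N + 1))\<bar> \<le> m"
    if "k \<le> K" for k
  proof -
    have "real k * h \<le> real K * h" using that h by (intro mult_right_mono) auto
    then have "real k * h \<le> T" using K(2) by linarith
    then have "real k * h \<in> \<rat> \<inter> {0..T}" using h by simp
    then show ?thesis using range by blast
  qed
  have "has_time_modulus T (\<lambda>t. X 0 t \<omega>) N (2 * (4 * e))"
  proof (rule has_time_modulus_from_rationals[OF T h(1)])
    show "continuous (at_right x) (X 0 t \<omega>)" if "t \<in> {0..T}" for t x
      using harris_flowD(4)[OF HF _ _ \<omega>] that by auto
    show "continuous_on {0..T} (\<lambda>t. X 0 t \<omega> d)" if "d \<in> \<rat>" for d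
      using regular that by blast
    show "\<bar>X 0 q2 \<omega> d - X 0 q1 \<omega> d\<bar> \<le> 4 * e"
      if "q1 \<in> \<rat>" "q2 \<in> \<rat>" "q1 \<in> {0..T}" "q2 \<in> {0..T}" "\<bar>q2 - q1\<bar> \<le> h" "d \<in> \<rat>" "\<bar>d\<bar> \<le> N + 1"
      for q1 q2 d
      using rational_modulus_from_grid[where \<Phi>="\<lambda>u v. X u v \<omega>", OF mono cocycle h e K(1) grid_range L]
        grid that(1-5,7) by blast
  qed (use e in auto)
  then show ?thesis by simp
qed

lemma harris_flow_time_modulus_off_grid_event:
  assumes HF: "harris_flow M \<phi> a X" and a: "a \<in> borel_measurable borel"
    and growth: "\<And>z. \<bar>a z\<bar> \<le> C * (1 + \<bar>z\<bar>)" and T: "0 < T"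
    and e: "0 < e" and h: "h \<in> \<rat>" "0 < h" "C * (2*h) \<le> 1/2"
    and \<alpha>: "0 < \<alpha>" "3 * (2*h)^2 / \<alpha>^4 \<le> 1/2" "2*\<alpha> + 2*(2*h)*(C*(1 + Mb + 2*\<alpha>)) \<le> e"
    and K: "T < real (Suc K) * h" "real K * h \<le> T"
    and L: "2 * real m \<le> real L * e" and y: "\<And>i. i \<le> L + 1 \<Longrightarrow> \<bar>- real m + real i * e\<bar> \<le> Mb"
  defines "Y \<equiv> \<lambda>x. {\<omega>\<in>space M. \<exists>q\<in>\<rat> \<inter> {0..T}. real m < \<bar>X 0 q \<omega> x\<bar>}"
  obtains Z where "Z \<in> sets M"
    "measure M Z \<le> measure M (Y (N + 1)) + measure M (Y (- (N + 1)))
      + (real K + 1) * (real L + 2) * (6 * (2*h)^2 / \<alpha>^4)"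
    "AE \<omega> in M. \<omega> \<notin> Z \<longrightarrow> has_time_modulus T (\<lambda>t. X 0 t \<omega>) N (8 * e)"
proof -
  interpret prob_space M using harris_flowD(1)[OF HF] .
  have Y_events: "Y x \<in> events" for x
    unfolding Y_def by (rule events_exceeds_on_rationals) (use harris_flowD(2)[OF HF] in auto)
  obtain Zg where Zg: "Zg \<in> events" "prob Zg \<le> (real K + 1) * (real L + 2) * (6 * (2*h)^2 / \<alpha>^4)"
    "AE \<omega> in M. \<omega> \<notin> Zg \<longrightarrow> (\<forall>k\<le>K. \<forall>i\<le>L + 1. \<forall>r\<in>{real k * h..real k * h + 2*h}.
      \<bar>X (real k * h) r \<omega> (- real m + real i * e) - (- real m + real i * e)\<bar>
        \<le> 2*\<alpha> + 2*(2*h)*(C*(1 + Mb + 2*\<alpha>)))"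
    using harris_flow_grid_exceptional_set[OF HF a growth h(2,3) \<alpha>(1,2) y] by blast
  define Z where "Z = Y (N + 1) \<union> Y (- (N + 1)) \<union> Zg"
  have "prob Z \<le> prob (Y (N + 1) \<union> Y (- (N + 1))) + prob Zg"
    unfolding Z_def using Y_events Zg(1) by (intro measure_Un_le) auto
  also have "prob (Y (N + 1) \<union> Y (- (N + 1))) \<le> prob (Y (N + 1)) + prob (Y (- (N + 1)))"
    using Y_events by (intro measure_Un_le) auto
  finally have "prob Z \<le> prob (Y (N + 1)) + prob (Y (- (N + 1)))
      + (real K + 1) * (real L + 2) * (6 * (2*h)^2 / \<alpha>^4)"
    using Zg(2) by linarith
  moreover have "AE \<omega> in M. \<omega> \<notin> Z \<longrightarrow> has_time_modulus T (\<lambda>t. X 0 t \<omega>) N (8 * e)"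
    using Zg(3) harris_flow_AE_rational_regularity[OF HF a growth, of T] AE_space
  proof eventually_elim
    case (elim \<omega>)
    show ?case
    proof
      assume "\<omega> \<notin> Z"
      then have "\<omega> \<notin> Y (N + 1)" "\<omega> \<notin> Y (- (N + 1))" "\<omega> \<notin> Zg" by (simp_all add: Z_def)
      then have "\<forall>q\<in>\<rat> \<inter> {0..T}. \<bar>X 0 q \<omega> (N + 1)\<bar> \<le> m \<and> \<bar>X 0 q \<omega> (- (N + 1))\<bar> \<le> m"
        and "\<forall>k\<le>K. \<forall>i\<le>L + 1. \<forall>r\<in>{real k * h..real k * h + 2*h}.
          \<bar>X (real k * h) r \<omega> (- real m + real i * e) - (- real m + real i * e)\<bar>
            \<le> 2*\<alpha> + 2*(2*h)*(C*(1 + Mb + 2*\<alpha>))"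
        using elim(1,3) by (auto simp: Y_def not_less)
      moreover have "x \<le> e" if "x \<le> 2*\<alpha> + 2*(2*h)*(C*(1 + Mb + 2*\<alpha>))" for x
        using that \<alpha>(3) by linarith
      ultimately show "has_time_modulus T (\<lambda>t. X 0 t \<omega>) N (8 * e)"
        by (intro harris_flow_time_modulus_from_grid[OF HF elim(3,2) T h(2,1) e K _ L]) blast+
    qed
  qed
  moreover have "Z \<in> sets M" using Y_events Zg(1) by (auto simp: Z_def)
  ultimately show ?thesis using that by blast
qed

text \<open>The exceptional event: the flow started from \<open>\<plusminus>(N + 1)\<close> leaves the window \<open>[-m, m]\<close>
  at a rational time, or the noise started at some point of the space-time grid is large on the
  following time step. There are \<open>O(1/h)\<close> grid times, each contributing \<open>O(h\<^sup>2)\<close>.\<close>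
lemma harris_flow_time_modulus_off_small_set:
  assumes HF: "harris_flow M \<phi> a X" and a: "a \<in> borel_measurable borel"
    and growth: "\<And>z. \<bar>a z\<bar> \<le> C * (1 + \<bar>z\<bar>)"
    and T: "0 < T" and \<epsilon>: "0 < \<epsilon>" and \<eta>: "0 < \<eta>"
  shows "\<exists>Z\<in>sets M. measure M Z \<le> \<eta> \<and> (AE \<omega> in M. \<omega> \<notin> Z \<longrightarrow> has_time_modulus T (\<lambda>t. X 0 t \<omega>) N \<epsilon>)"
proof -
  interpret prob_space M using harris_flowD(1)[OF HF] .
  define e where "e = \<epsilon> / 8"
  define \<alpha> where "\<alpha> = e / 4"
  have e: "0 < e" "0 < \<alpha>" using \<epsilon> by (simp_all add: e_def \<alpha>_def)
  let ?Y = "\<lambda>m x. {\<omega>\<in>space M. \<exists>q\<in>\<rat> \<inter> {0..T}. real m < \<bar>X 0 q \<omega> x\<bar>}"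
  have "(\<lambda>m. prob (?Y m x)) \<longlonglongrightarrow> 0" for x
    by (rule prob_exceeds_on_rationals_tendsto_0[OF compact_Icc])
      (use harris_flowD(2)[OF HF] harris_flow_AE_continuous_path[OF HF a growth order.refl] in auto)
  then have "\<forall>\<^sub>F m in sequentially. prob (?Y m (N + 1)) < \<eta>/4 \<and> prob (?Y m (- (N + 1))) < \<eta>/4"
    using \<eta> by (intro eventually_conj order_tendstoD(2)) auto
  then obtain m where m: "prob (?Y m (N + 1)) < \<eta>/4" "prob (?Y m (- (N + 1))) < \<eta>/4"
    unfolding eventually_sequentially by auto
  define L where "L = nat \<lceil>2 * real m / e\<rceil>"
  define Mb where "Mb = real m + 2 * e"
  have L: "2 * real m \<le> real L * e" "real L * e \<le> 2 * real m + e"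
  proof -
    have "real L = of_int \<lceil>2 * real m / e\<rceil>" using e by (simp add: L_def)
    then have "2 * real m / e \<le> real L" "real L < 2 * real m / e + 1"
      using ceiling_correct[of "2 * real m / e"] by linarith+
    then show "2 * real m \<le> real L * e" "real L * e \<le> 2 * real m + e"
      using e by (simp_all add: field_simps)
  qed
  have y_bound: "\<bar>- real m + real i * e\<bar> \<le> Mb" if "i \<le> L + 1" for i
  proof -
    have "real i * e \<le> (real L + 1) * e" using that e by (intro mult_right_mono) auto
    then show ?thesis using L e by (simp add: Mb_def abs_le_iff algebra_simps)
  qed
  have "\<forall>\<^sub>F h in at_right 0. C * (2*h) < 1/2 \<and> 2*(2*h)*(C*(1 + Mb + 2*\<alpha>)) < e/2 \<and>
      3*(2*h)^2/\<alpha>^4 < 1/2 \<and> (T + h) * h * (real L + 2) * (24 / \<alpha>^4) < \<eta>/2"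
    using e \<eta> by (intro eventually_conj order_tendstoD(2)) (auto intro!: tendsto_eq_intros)
  then obtain h where h: "h \<in> \<rat>" "0 < h" "C * (2*h) \<le> 1/2" "2*(2*h)*(C*(1 + Mb + 2*\<alpha>)) \<le> e/2"
    "3*(2*h)^2/\<alpha>^4 \<le> 1/2" "(T + h) * h * (real L + 2) * (24 / \<alpha>^4) \<le> \<eta>/2"
    by (rule Rats_witness_at_right_0) auto
  define K where "K = nat \<lfloor>T / h\<rfloor>"
  have K: "T < real (Suc K) * h" "real K * h \<le> T"
  proof -
    have "real K = of_int \<lfloor>T / h\<rfloor>" using T h by (simp add: K_def)
    then have "real K \<le> T / h" "T / h < real K + 1" by linarith+
    then show "T < real (Suc K) * h" "real K * h \<le> T" using h by (simp_all add: field_simps)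
  qed
  have "2*\<alpha> + 2*(2*h)*(C*(1 + Mb + 2*\<alpha>)) \<le> e" using h(4) by (simp add: \<alpha>_def)
  then obtain Z where Z: "Z \<in> events"
    "prob Z \<le> prob (?Y m (N + 1)) + prob (?Y m (- (N + 1)))
      + (real K + 1) * (real L + 2) * (6 * (2*h)^2 / \<alpha>^4)"
    "AE \<omega> in M. \<omega> \<notin> Z \<longrightarrow> has_time_modulus T (\<lambda>t. X 0 t \<omega>) N (8 * e)"
    using harris_flow_time_modulus_off_grid_event[OF HF a growth T e(1) h(1-3) e(2) h(5) _ K L(1) y_bound]
    by blast
  have "(real K + 1) * (real L + 2) * (6 * (2*h)^2 / \<alpha>^4) = ((real K + 1) * h) * h * (real L + 2) * (24 / \<alpha>^4)"
    by (simp add: power2_eq_square)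
  also have "\<dots> \<le> (T + h) * h * (real L + 2) * (24 / \<alpha>^4)"
    using K(2) h e by (intro mult_right_mono) (auto simp: algebra_simps)
  finally have "prob Z \<le> \<eta>" using Z(2) m h(6) by linarith
  moreover have "8 * e = \<epsilon>" by (simp add: e_def)
  ultimately show ?thesis using Z(1,3) by auto
qed

theorem mainTheorem4:
  fixes M :: "'a measure" and \<phi> a :: "real \<Rightarrow> real"
    and X :: "real \<Rightarrow> real \<Rightarrow> 'a \<Rightarrow> real \<Rightarrow> real"
  assumes "\<phi> \<in> Phi_star"
    and "a \<in> borel_measurable borel" and "linear_growth a"
    and "harris_flow M \<phi> a X"
    and "T > 0"
  shows "AE \<omega> in M. \<forall>N>0. \<forall>\<epsilon>>0. \<exists>h>0. \<forall>s\<in>{0..T}. \<forall>t\<in>{0..T}. \<bar>t - s\<bar> \<le> h \<longrightarrow>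
           (\<forall>x. \<bar>x\<bar> \<le> N \<longrightarrow> \<bar>X 0 t \<omega> x - X 0 s \<omega> x\<bar> \<le> \<epsilon>)"
proof -
  obtain C where growth: "\<And>z. \<bar>a z\<bar> \<le> C * (1 + \<bar>z\<bar>)"
    using \<open>linear_growth a\<close> unfolding linear_growth_def by blast
  interpret prob_space M using harris_flowD(1)[OF \<open>harris_flow M \<phi> a X\<close>] .
  have "AE \<omega> in M. has_time_modulus T (\<lambda>t. X 0 t \<omega>) (real n) (inverse (real (Suc j)))" for n j :: nat
    using harris_flow_time_modulus_off_small_set[OF \<open>harris_flow M \<phi> a X\<close> \<open>a \<in> borel_measurable borel\<close>
        growth \<open>T > 0\<close>]
    by (intro AE_of_small_exceptional_sets) simp
  then have "AE \<omega> in M. \<forall>n j::nat. has_time_modulus T (\<lambda>t. X 0 t \<omega>) (real n) (inverse (real (Suc j)))"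
    by (simp add: AE_all_countable)
  then show ?thesis
  proof eventually_elim
    case (elim \<omega>)
    have "has_time_modulus T (\<lambda>t. X 0 t \<omega>) N \<epsilon>" if \<epsilon>: "0 < \<epsilon>" for N \<epsilon> :: real
    proof -
      obtain n :: nat where "N \<le> real n" using real_arch_simple by blast
      moreover obtain j where "inverse (real (Suc j)) < \<epsilon>" using reals_Archimedean[OF \<epsilon>] by blast
      ultimately show ?thesis using elim by (blast intro: has_time_modulus_mono less_imp_le)
    qed
    then show ?case by (simp add: has_time_modulus_def)
  qed
qed

end
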